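(* Let $\mathcal{L}$ be a polar space. Then for all $p,q\in\mathcal{L}$ the fractional join of $p$ and $q$ equals $\frac12(p\vee_L q)+\frac12(p\vee_R q)$ (as formal combinations, coefficients of equal elements being added); i.e., the fractional join operation of $\mathcal{L}$ is $\frac12\vee_L+\frac12\vee_R$.
   Context: $\mathcal{S}_2=\{-1,0,1\}$ is the poset with minimum $0$ and incomparable $-1,1$; $\mathcal{S}_2^n$ has the componentwise order. A polar space of rank $n$ is a meet-semilattice $\mathcal{L}$ that is a union of subsemilattices called polar frames such that (P0) each polar frame is isomorphic to $\mathcal{S}_2^n$; (P1) any two chains of $\mathcal{L}$ lie in a common polar frame; (P2) if polar frames $\mathcal{F},\mathcal{F}'$ both contain chains $C,D$, there is an isomorphism $\mathcal{F}\to\mathcal{F}'$ fixing $C$ and $D$ pointwise. A polar space is a modular semilattice (a meet-semilattice of finite rank, rank function $r$, whose principal ideals are modular lattices and in which $x\vee y\vee z$ exists whenever $x\vee y,y\vee z,z\vee x$ exist). Left/right join: for $p,q$, there is a unique maximal $u\in[p\wedge q,q]$ such that $p\vee u$ exists; $p\vee_L q:=p\vee u$. Similarly $p\vee_R q:=q\vee v$ for the unique maximal $v\in[p\wedge q,p]$ with $q\vee v$ existing. Fractional join: for $p,q$ let $I(p,q)$ be the set of elements on shortest $p$–$q$ paths of the covering graph of $\mathcal{L}$; $r(u;p,q)=(r(u\wedge p)-r(p\wedge q),r(u\wedge q)-r(p\wedge q))$; $\mathrm{Conv}I(p,q)$ the convex hull of these vectors; $\mathcal{E}(p,q)$ the set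 of $u\in I(p,q)$ with $r(u;p,q)$ a componentwise-maximal extreme point of $\mathrm{Conv}I(p,q)$; $C(u;p,q)=\{w\in\mathbf{R}^2_{\ge0}:\langle w,r(u;p,q)\rangle=\max_{z\in\mathrm{Conv}I(p,q)}\langle w,z\rangle\}$, which has the form $\{(x,y)\in\mathbf{R}^2_{\ge 0}:y\cos\alpha\le x\sin\alpha,\ y\cos\beta\ge x\sin\beta\}$ with $0\le\beta\le\alpha\le\pi/2$, and $[C(u;p,q)]=\frac{\sin\alpha}{\sin\alpha+\cos\alpha}-\frac{\sin\beta}{\sin\beta+\cos\beta}$. The fractional join of $p,q$ is the formal combination $\sum_{u\in\mathcal{E}(p,q)}[C(u;p,q)]\,u$. *)

theory Defs
  imports "HOL-Analysis.Analysis"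
begin

definition is_meet :: "'a::order set \<Rightarrow> 'a \<Rightarrow> 'a \<Rightarrow> 'a \<Rightarrow> bool" where
  "is_meet L x y z \<longleftrightarrow> z \<in> L \<and> z \<le> x \<and> z \<le> y \<and> (\<forall>w\<in>L. w \<le> x \<and> w \<le> y \<longrightarrow> w \<le> z)"

definition meet :: "'a::order set \<Rightarrow> 'a \<Rightarrow> 'a \<Rightarrow> 'a" where
  "meet L x y = (THE z. is_meet L x y z)"

definition is_join :: "'a::order set \<Rightarrow> 'a \<Rightarrow> 'a \<Rightarrow> 'a \<Rightarrow> bool" where
  "is_join L x y z \<longleftrightarrow> z \<in> L \<and> x \<le> z \<and> y \<le> z \<and> (\<forall>w\<in>L. x \<le> w \<and> y \<le> w \<longrightarrow> z \<le> w)"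

definition has_join :: "'a::order set \<Rightarrow> 'a \<Rightarrow> 'a \<Rightarrow> bool" where
  "has_join L x y \<longleftrightarrow> (\<exists>z. is_join L x y z)"

definition join :: "'a::order set \<Rightarrow> 'a \<Rightarrow> 'a \<Rightarrow> 'a" where
  "join L x y = (THE z. is_join L x y z)"

definition meet_semilattice :: "'a::order set \<Rightarrow> bool" where
  "meet_semilattice L \<longleftrightarrow> (\<forall>x\<in>L. \<forall>y\<in>L. \<exists>z. is_meet L x y z)"

text \<open>S_2 = {-1,0,1} with minimum 0 and -1, 1 incomparable; S_2^n is represented by
  functions nat => int supported on {0..<n}, ordered componentwise.\<close>

definition S2_le :: "int \<Rightarrow> int \<Rightarrow> bool" where
  "S2_le a b \<longleftrightarrow> a = 0 \<or> a = b"

definition S2n :: "nat \<Rightarrow> (nat \<Rightarrow> int) set" where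
  "S2n n = {x. (\<forall>i<n. x i \<in> {-1, 0, 1}) \<and> (\<forall>i\<ge>n. x i = 0)}"

definition S2n_le :: "(nat \<Rightarrow> int) \<Rightarrow> (nat \<Rightarrow> int) \<Rightarrow> bool" where
  "S2n_le x y \<longleftrightarrow> (\<forall>i. S2_le (x i) (y i))"

definition is_chain :: "'a::order set \<Rightarrow> 'a set \<Rightarrow> bool" where
  "is_chain L C \<longleftrightarrow> C \<subseteq> L \<and> Complete_Partial_Order.chain (\<le>) C"

definition order_iso_on :: "('a::order \<Rightarrow> 'b::order) \<Rightarrow> 'a set \<Rightarrow> 'b set \<Rightarrow> bool" where
  "order_iso_on f A B \<longleftrightarrow> bij_betw f A B \<and> (\<forall>x\<in>A. \<forall>y\<in>A. x \<le> y \<longleftrightarrow> f x \<le> f y)"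

definition subsemilattice :: "'a::order set \<Rightarrow> 'a set \<Rightarrow> bool" where
  "subsemilattice L F \<longleftrightarrow> F \<subseteq> L \<and> (\<forall>x\<in>F. \<forall>y\<in>F. meet L x y \<in> F)"

definition polar_space :: "'a::order set \<Rightarrow> 'a set set \<Rightarrow> nat \<Rightarrow> bool" where
  "polar_space L Frames n \<longleftrightarrow>
     meet_semilattice L \<and>
     (\<forall>F\<in>Frames. subsemilattice L F) \<and>
     L = \<Union> Frames \<and>
     \<comment> \<open>(P0)\<close>
     (\<forall>F\<in>Frames. \<exists>f. bij_betw f F (S2n n) \<and> (\<forall>x\<in>F. \<forall>y\<in>F. x \<le> y \<longleftrightarrow> S2n_le (f x) (f y))) \<and>
     \<comment> \<open>(P1)\<close>
     (\<forall>C D. is_chain L C \<and> is_chain L D \<longrightarrow> (\<exists>F\<in>Frames. C \<subseteq> F \<and> D \<subseteq> F)) \<and>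
     \<comment> \<open>(P2)\<close>
     (\<forall>F\<in>Frames. \<forall>F'\<in>Frames. \<forall>C D. is_chain L C \<and> is_chain L D \<and> C \<subseteq> F \<and> D \<subseteq> F
        \<and> C \<subseteq> F' \<and> D \<subseteq> F' \<longrightarrow>
        (\<exists>\<phi>. order_iso_on \<phi> F F' \<and> (\<forall>x\<in>C \<union> D. \<phi> x = x)))"

text \<open>Rank: length (number of covering steps) of a longest chain below x.\<close>
definition rk :: "'a::order set \<Rightarrow> 'a \<Rightarrow> nat" where
  "rk L x = Max {card C | C. is_chain L C \<and> finite C \<and> (\<forall>y\<in>C. y \<le> x)} - 1"

definition covers :: "'a::order set \<Rightarrow> 'a \<Rightarrow> 'a \<Rightarrow> bool" where
  "covers L x y \<longleftrightarrow> x \<in> L \<and> y \<in> L \<and> x < y \<and> \<not> (\<exists>z\<in>L. x < z \<and> z < y)"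

definition adj :: "'a::order set \<Rightarrow> 'a \<Rightarrow> 'a \<Rightarrow> bool" where
  "adj L x y \<longleftrightarrow> covers L x y \<or> covers L y x"

definition cpath :: "'a::order set \<Rightarrow> 'a list \<Rightarrow> 'a \<Rightarrow> 'a \<Rightarrow> bool" where
  "cpath L xs p q \<longleftrightarrow> xs \<noteq> [] \<and> hd xs = p \<and> last xs = q \<and> set xs \<subseteq> L \<and>
     (\<forall>i. Suc i < length xs \<longrightarrow> adj L (xs ! i) (xs ! Suc i))"

definition shortest_cpath :: "'a::order set \<Rightarrow> 'a list \<Rightarrow> 'a \<Rightarrow> 'a \<Rightarrow> bool" where
  "shortest_cpath L xs p q \<longleftrightarrow> cpath L xs p q \<and>
     (\<forall>ys. cpath L ys p q \<longrightarrow> length xs \<le> length ys)"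

definition Ipq :: "'a::order set \<Rightarrow> 'a \<Rightarrow> 'a \<Rightarrow> 'a set" where
  "Ipq L p q = {u. \<exists>xs. shortest_cpath L xs p q \<and> u \<in> set xs}"

definition left_join :: "'a::order set \<Rightarrow> 'a \<Rightarrow> 'a \<Rightarrow> 'a" where
  "left_join L p q = join L p (THE u. u \<in> L \<and> meet L p q \<le> u \<and> u \<le> q \<and> has_join L p u \<and>
       (\<forall>v\<in>L. meet L p q \<le> v \<and> v \<le> q \<and> has_join L p v \<and> u \<le> v \<longrightarrow> v = u))"

definition right_join :: "'a::order set \<Rightarrow> 'a \<Rightarrow> 'a \<Rightarrow> 'a" where
  "right_join L p q = join L q (THE v. v \<in> L \<and> meet L p q \<le> v \<and> v \<le> p \<and> has_join L q v \<and>
       (\<forall>w\<in>L. meet L p q \<le> w \<and> w \<le> p \<and> has_join L q w \<and> v \<le> w \<longrightarrow> w = v))"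

definition rvec :: "'a::order set \<Rightarrow> 'a \<Rightarrow> 'a \<Rightarrow> 'a \<Rightarrow> real \<times> real" where
  "rvec L u p q = (real (rk L (meet L u p)) - real (rk L (meet L p q)),
                   real (rk L (meet L u q)) - real (rk L (meet L p q)))"

definition ConvI :: "'a::order set \<Rightarrow> 'a \<Rightarrow> 'a \<Rightarrow> (real \<times> real) set" where
  "ConvI L p q = convex hull ((\<lambda>u. rvec L u p q) ` Ipq L p q)"

definition Epq :: "'a::order set \<Rightarrow> 'a \<Rightarrow> 'a \<Rightarrow> 'a set" where
  "Epq L p q = {u \<in> Ipq L p q. rvec L u p q extreme_point_of ConvI L p q \<and>
      (\<forall>z\<in>ConvI L p q. fst (rvec L u p q) \<le> fst z \<and> snd (rvec L u p q) \<le> snd z \<longrightarrow> z = rvec L u p q)}"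

definition Cone :: "'a::order set \<Rightarrow> 'a \<Rightarrow> 'a \<Rightarrow> 'a \<Rightarrow> (real \<times> real) set" where
  "Cone L u p q = {w. 0 \<le> fst w \<and> 0 \<le> snd w \<and>
      w \<bullet> rvec L u p q = (SUP z\<in>ConvI L p q. w \<bullet> z)}"

definition cone_weight :: "(real \<times> real) set \<Rightarrow> real" where
  "cone_weight C = (THE c. \<exists>\<alpha> \<beta>. 0 \<le> \<beta> \<and> \<beta> \<le> \<alpha> \<and> \<alpha> \<le> pi / 2 \<and>
      C = {(x, y). 0 \<le> x \<and> 0 \<le> y \<and> y * cos \<alpha> \<le> x * sin \<alpha> \<and> y * cos \<beta> \<ge> x * sin \<beta>} \<and>
      c = sin \<alpha> / (sin \<alpha> + cos \<alpha>) - sin \<beta> / (sin \<beta> + cos \<beta>))"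

text \<open>The fractional join as a formal combination: coefficient function on elements.\<close>
definition frac_join :: "'a::order set \<Rightarrow> 'a \<Rightarrow> 'a \<Rightarrow> 'a \<Rightarrow> real" where
  "frac_join L p q = (\<lambda>u. if u \<in> Epq L p q then cone_weight (Cone L u p q) else 0)"

end

theory Submission
  imports Defs
begin

text \<open>
  By (P1) and (P2) any two elements lie in a common polar frame, and meets, existing joins and
  ranks can be computed there coordinatewise in \<open>S\<^sub>2\<^sup>n\<close>: the rank is the number of non-zero
  coordinates and \<open>L\<close> is modular. Consequently the covering-graph distance is
  \<open>d(p, q) = r(p) + r(q) - 2 r(p \<and> q)\<close>, and \<open>u\<close> lies on a shortest \<open>p\<close>--\<open>q\<close> path iff
  \<open>p \<and> q \<le> u = (u \<and> p) \<or> (u \<and> q)\<close>.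

  Let \<open>g\<close> be the greatest element of \<open>[p \<and> q, q]\<close> joinable with \<open>p\<close>, so that
  \<open>p \<or>\<^sub>L q = p \<or> g\<close>. A computation in a frame through the chains
  \<open>p \<and> q \<le> u \<and> p \<le> p\<close> and \<open>p \<and> q \<le> u \<and> q \<le> q\<close> puts every rank vector \<open>r(u; p, q)\<close> into the
  region \<open>x \<le> A, y \<le> B, x + y \<le> S\<close> with \<open>A = r(p) - r(p \<and> q)\<close>, \<open>B = r(q) - r(p \<and> q)\<close> and
  \<open>S = r(p) + r(g) - 2 r(p \<and> q)\<close>, and \<open>p \<or>\<^sub>L q\<close>, \<open>p \<or>\<^sub>R q\<close> attain its corners \<open>(A, S - A)\<close> and
  \<open>(S - B, B)\<close>. So these are the only componentwise-maximal extreme points of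
  \<open>Conv I(p, q)\<close>; their normal cones are the two halves of the quadrant cut by the diagonal,
  each of weight \<open>1/2\<close>, or the whole quadrant, of weight \<open>1\<close>, when the two corners coincide.
\<close>

section \<open>Sign vectors\<close>

definition S2n_meet :: "(nat \<Rightarrow> int) \<Rightarrow> (nat \<Rightarrow> int) \<Rightarrow> nat \<Rightarrow> int" where
  "S2n_meet v w = (\<lambda>i. if v i = w i then v i else 0)"

definition S2n_join :: "(nat \<Rightarrow> int) \<Rightarrow> (nat \<Rightarrow> int) \<Rightarrow> nat \<Rightarrow> int" where
  "S2n_join v w = (\<lambda>i. if v i = 0 then w i else v i)"

definition S2n_compatible :: "(nat \<Rightarrow> int) \<Rightarrow> (nat \<Rightarrow> int) \<Rightarrow> bool" where
  "S2n_compatible v w \<longleftrightarrow> (\<forall>i. v i = 0 \<or> w i = 0 \<or> v i = w i)"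

definition S2n_rank :: "nat \<Rightarrow> (nat \<Rightarrow> int) \<Rightarrow> nat" where
  "S2n_rank n v = (\<Sum>i<n. if v i = 0 then 0 else 1)"

lemma S2n_le_refl: "S2n_le v v"
  by (simp add: S2n_le_def S2_le_def)

lemma S2n_le_trans: "S2n_le u v \<Longrightarrow> S2n_le v w \<Longrightarrow> S2n_le u w"
  by (auto simp add: S2n_le_def S2_le_def) metis

lemma S2n_meet_in: "v \<in> S2n n \<Longrightarrow> w \<in> S2n n \<Longrightarrow> S2n_meet v w \<in> S2n n"
  by (auto simp add: S2n_def S2n_meet_def)

lemma S2n_join_in: "v \<in> S2n n \<Longrightarrow> w \<in> S2n n \<Longrightarrow> S2n_join v w \<in> S2n n"
  by (auto simp add: S2n_def S2n_join_def)

lemma S2n_meet_le1: "S2n_le (S2n_meet v w) v"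
  by (auto simp add: S2n_le_def S2_le_def S2n_meet_def)

lemma S2n_meet_le2: "S2n_le (S2n_meet v w) w"
  by (auto simp add: S2n_le_def S2_le_def S2n_meet_def)

lemma S2n_meet_greatest: "S2n_le u v \<Longrightarrow> S2n_le u w \<Longrightarrow> S2n_le u (S2n_meet v w)"
  by (auto simp add: S2n_le_def S2_le_def S2n_meet_def) metis

lemma S2n_join_ge1: "S2n_le v (S2n_join v w)"
  by (auto simp add: S2n_le_def S2_le_def S2n_join_def)

lemma S2n_join_ge2: "S2n_compatible v w \<Longrightarrow> S2n_le w (S2n_join v w)"
  by (auto simp add: S2n_le_def S2_le_def S2n_join_def S2n_compatible_def)

lemma S2n_join_least: "S2n_le v u \<Longrightarrow> S2n_le w u \<Longrightarrow> S2n_le (S2n_join v w) u"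
  by (auto simp add: S2n_le_def S2_le_def S2n_join_def)

lemma S2n_compatible_if_bounded: "S2n_le v u \<Longrightarrow> S2n_le w u \<Longrightarrow> S2n_compatible v w"
  by (auto simp add: S2n_le_def S2_le_def S2n_compatible_def) metis

lemma S2n_rank_mono: "S2n_le v w \<Longrightarrow> S2n_rank n v \<le> S2n_rank n w"
  unfolding S2n_rank_def by (rule sum_mono) (auto simp: S2n_le_def S2_le_def)

lemma S2n_rank_strict_mono:
  assumes "v \<in> S2n n" "w \<in> S2n n" "S2n_le v w" "v \<noteq> w"
  shows "S2n_rank n v < S2n_rank n w"
proof -
  obtain i where i: "v i \<noteq> w i" using assms(4) by auto
  have "i < n" using i assms(1,2) by (auto simp: S2n_def) (metis not_less)
  have "v i = 0" "w i \<noteq> 0" using assms(3) i by (auto simp: S2n_le_def S2_le_def)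
  then show ?thesis unfolding S2n_rank_def
    using assms(3) \<open>i < n\<close> by (intro sum_strict_mono_ex1) (auto simp: S2n_le_def S2_le_def)
qed

lemma S2n_rank_fun_upd_zero:
  assumes "i < n" "v i \<noteq> 0"
  shows "S2n_rank n (v(i := 0)) + 1 = S2n_rank n v"
proof -
  have "S2n_rank n v = (\<Sum>j\<in>{..<n}-{i}. if v j = 0 then 0 else 1) + 1"
    unfolding S2n_rank_def using assms by (subst sum.remove[of _ i]) auto
  moreover have "S2n_rank n (v(i:=0)) = (\<Sum>j\<in>{..<n}-{i}. if v j = 0 then 0 else 1)"
    unfolding S2n_rank_def using assms by (subst sum.remove[of _ i]) (auto intro!: sum.cong)
  ultimately show ?thesis by simp
qed

lemma S2n_rank_join_meet:
  "S2n_compatible v w \<Longrightarrow> S2n_rank n (S2n_join v w) + S2n_rank n (S2n_meet v w) = S2n_rank n v + S2n_rank n w"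
  unfolding S2n_rank_def sum.distrib[symmetric]
  by (rule sum.cong) (auto simp: S2n_join_def S2n_meet_def S2n_compatible_def)

lemma S2n_ex_rank_Suc_between:
  assumes "v \<in> S2n n" "w \<in> S2n n" "S2n_le v w" "v \<noteq> w"
  shows "\<exists>z\<in>S2n n. S2n_le v z \<and> S2n_le z w \<and> z \<noteq> v \<and> S2n_rank n z = S2n_rank n v + 1"
proof -
  obtain i where i: "v i \<noteq> w i" using assms(4) by auto
  have "i < n" using i assms(1,2) by (auto simp: S2n_def) (metis not_less)
  have vi: "v i = 0" "w i \<noteq> 0" using assms(3) i by (auto simp: S2n_le_def S2_le_def)
  define z where "z = v(i := w i)"
  have "z \<in> S2n n" using assms(1,2) \<open>i < n\<close> by (auto simp: S2n_def z_def)
  moreover have "S2n_le v z" "S2n_le z w" using assms(3) vi by (auto simp: S2n_le_def S2_le_def z_def)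
  moreover have "z \<noteq> v" using vi by (auto simp: z_def fun_eq_iff)
  moreover have "S2n_rank n z = S2n_rank n v + 1"
    using S2n_rank_fun_upd_zero[of i n z] \<open>i < n\<close> vi by (simp add: z_def fun_upd_idem)
  ultimately show ?thesis by blast
qed

lemma S2n_compatible_if_join_meet:
  assumes "S2n_compatible p v" "S2n_le p z" "S2n_le v w" "w = S2n_join v (S2n_meet w z)"
  shows "S2n_compatible p w"
  unfolding S2n_compatible_def
proof
  fix i
  have "w i = (if v i = 0 then (if w i = z i then w i else 0) else v i)"
    using fun_cong[OF assms(4), of i] unfolding S2n_join_def S2n_meet_def .
  moreover have "p i = 0 \<or> v i = 0 \<or> p i = v i" "p i = 0 \<or> p i = z i" "v i = 0 \<or> v i = w i"
    using assms(1-3) by (auto simp: S2n_compatible_def S2n_le_def S2_le_def)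
  ultimately show "p i = 0 \<or> w i = 0 \<or> p i = w i" by auto
qed

text \<open>The largest vector below \<open>q\<close> that is compatible with \<open>p\<close>.\<close>

definition S2n_compatible_part :: "(nat \<Rightarrow> int) \<Rightarrow> (nat \<Rightarrow> int) \<Rightarrow> nat \<Rightarrow> int" where
  "S2n_compatible_part p q = (\<lambda>i. if p i = 0 \<or> p i = q i then q i else 0)"

lemma S2n_compatible_part_in: "q \<in> S2n n \<Longrightarrow> S2n_compatible_part p q \<in> S2n n"
  by (auto simp: S2n_def S2n_compatible_part_def)

lemma S2n_compatible_part_le: "S2n_le (S2n_compatible_part p q) q"
  by (auto simp: S2n_le_def S2_le_def S2n_compatible_part_def)

lemma S2n_meet_le_compatible_part: "S2n_le (S2n_meet p q) (S2n_compatible_part p q)"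
  by (auto simp: S2n_le_def S2_le_def S2n_compatible_part_def S2n_meet_def)

lemma S2n_compatible_compatible_part: "S2n_compatible p (S2n_compatible_part p q)"
  by (auto simp: S2n_compatible_def S2n_compatible_part_def)

lemma S2n_rank_add_le_compatible_part:
  assumes "S2n_le a p" "S2n_le b q" "S2n_compatible a b"
  shows "S2n_rank n a + S2n_rank n b \<le> S2n_rank n p + S2n_rank n (S2n_compatible_part p q)"
  unfolding S2n_rank_def sum.distrib[symmetric]
proof (rule sum_mono)
  fix i
  have "a i = 0 \<or> a i = p i" "b i = 0 \<or> b i = q i" "a i = 0 \<or> b i = 0 \<or> a i = b i"
    using assms by (auto simp: S2n_le_def S2_le_def S2n_compatible_def)
  then show "(if a i = 0 then 0 else 1) + (if b i = 0 then 0 else 1)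
      \<le> (if p i = 0 then 0 else 1) + (if S2n_compatible_part p q i = 0 then 0 else (1::nat))"
    by (auto simp: S2n_compatible_part_def)
qed

lemma S2n_chain_card_le:
  assumes "finite D" "D \<subseteq> S2n n" "\<forall>a\<in>D. \<forall>b\<in>D. S2n_le a b \<or> S2n_le b a" "\<forall>d\<in>D. S2n_le d v"
  shows "card D \<le> S2n_rank n v + 1"
proof -
  have "inj_on (S2n_rank n) D"
    using assms(2,3) S2n_rank_strict_mono by (fastforce intro!: inj_onI)
  moreover have "S2n_rank n ` D \<subseteq> {..S2n_rank n v}"
    using assms(4) S2n_rank_mono by auto
  then have "card (S2n_rank n ` D) \<le> S2n_rank n v + 1"
    using card_mono[of "{..S2n_rank n v}"] by fastforce
  ultimately show ?thesis
    by (simp add: card_image)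
qed

lemma S2n_ex_chain_card:
  "v \<in> S2n n \<Longrightarrow> \<exists>D. finite D \<and> D \<subseteq> S2n n \<and> (\<forall>a\<in>D. \<forall>b\<in>D. S2n_le a b \<or> S2n_le b a)
     \<and> (\<forall>d\<in>D. S2n_le d v) \<and> card D = S2n_rank n v + 1"
proof (induction "S2n_rank n v" arbitrary: v)
  case 0
  then show ?case by (intro exI[of _ "{v}"]) (auto simp: S2n_le_refl)
next
  case (Suc k)
  then have "v \<noteq> (\<lambda>_. 0)" by (auto simp: S2n_rank_def)
  then obtain i where i: "v i \<noteq> 0" by auto
  have "i < n" using i Suc.prems by (auto simp: S2n_def) (metis not_less)
  define v' where "v' = v(i := 0)"
  have rank_v': "S2n_rank n v' + 1 = S2n_rank n v"
    using S2n_rank_fun_upd_zero[of i n v, OF \<open>i < n\<close> i] v'_def by simp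
  have "v' \<in> S2n n" using Suc.prems by (auto simp: S2n_def v'_def)
  then obtain D where D: "finite D" "D \<subseteq> S2n n" "\<forall>a\<in>D. \<forall>b\<in>D. S2n_le a b \<or> S2n_le b a"
     "\<forall>d\<in>D. S2n_le d v'" "card D = S2n_rank n v' + 1"
    using Suc.hyps(1)[of v'] Suc.hyps(2) rank_v' by auto
  have le: "S2n_le v' v" by (auto simp: S2n_le_def S2_le_def v'_def)
  have "\<not> S2n_le v v'" using i by (auto simp: S2n_le_def S2_le_def v'_def)
  then have "v \<notin> D" using D(4) by auto
  then show ?case
    using D Suc.prems le rank_v' S2n_le_trans S2n_le_refl by (intro exI[of _ "insert v D"]) auto
qed

lemma adj_commute: "adj L x y \<longleftrightarrow> adj L y x"
  by (auto simp: adj_def)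

lemma cpath_iff_successively:
  "cpath L xs a b \<longleftrightarrow> xs \<noteq> [] \<and> hd xs = a \<and> last xs = b \<and> set xs \<subseteq> L \<and> successively (adj L) xs"
  unfolding cpath_def successively_conv_nth by auto

lemma cpath_rev: "cpath L xs a b \<Longrightarrow> cpath L (rev xs) b a"
  unfolding cpath_iff_successively by (auto simp: hd_rev last_rev adj_commute)

lemma cpath_append: "cpath L xs a b \<Longrightarrow> cpath L ys b c \<Longrightarrow> cpath L (xs @ tl ys) a c"
  unfolding cpath_iff_successively
  by (cases ys) (auto simp: successively_append_iff successively_Cons)

lemma cpath_append_length:
  "cpath L ys b c \<Longrightarrow> length (xs @ tl ys) = length xs + length ys - 1"
  by (cases ys) (auto simp: cpath_def)

lemma cpath_take_drop:
  assumes "cpath L xs a b" "i < length xs"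
  shows "cpath L (take (Suc i) xs) a (xs ! i)" "cpath L (drop i xs) (xs ! i) b"
proof -
  have xs: "xs \<noteq> []" "hd xs = a" "last xs = b" "set xs \<subseteq> L" "successively (adj L) xs"
    using assms(1) by (auto simp: cpath_iff_successively)
  have "successively (adj L) (take (Suc i) xs)" "successively (adj L) (drop i xs)"
    using xs(5) successively_append_iff[of "adj L" "take (Suc i) xs" "drop (Suc i) xs"]
      successively_append_iff[of "adj L" "take i xs" "drop i xs"] by simp_all
  moreover have "last (take (Suc i) xs) = xs ! i"
    using assms(2) by (simp add: take_Suc_conv_app_nth)
  ultimately show "cpath L (take (Suc i) xs) a (xs ! i)"
    using xs set_take_subset[of "Suc i" xs] unfolding cpath_iff_successively by simp
  show "cpath L (drop i xs) (xs ! i) b"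
    using xs assms(2) \<open>successively (adj L) (drop i xs)\<close> set_drop_subset[of i xs]
    unfolding cpath_iff_successively by (simp add: hd_drop_conv_nth)
qed

lemma order_iso_on_inv_into:
  assumes "order_iso_on \<phi> F G" "b \<in> G"
  shows "inv_into F \<phi> b \<in> F" "\<phi> (inv_into F \<phi> b) = b"
  using assms by (auto simp: order_iso_on_def bij_betw_def inv_into_into f_inv_into_f)

lemma order_iso_on_le_iff:
  "order_iso_on \<phi> F G \<Longrightarrow> a \<in> F \<Longrightarrow> b \<in> F \<Longrightarrow> a \<le> b \<longleftrightarrow> \<phi> a \<le> \<phi> b"
  by (auto simp: order_iso_on_def)

lemma is_meet_unique: "is_meet L x y a \<Longrightarrow> is_meet L x y b \<Longrightarrow> a = b"
  unfolding is_meet_def by (blast intro: order.antisym)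

lemma join_eqI: "is_join L x y z \<Longrightarrow> join L x y = z"
  unfolding join_def is_join_def by (blast intro: order.antisym)

lemma is_join_join: "has_join L x y \<Longrightarrow> is_join L x y (join L x y)"
  unfolding has_join_def using join_eqI by metis

lemma is_chainI: "C \<subseteq> L \<Longrightarrow> (\<forall>x\<in>C. \<forall>y\<in>C. x \<le> y \<or> y \<le> x) \<Longrightarrow> is_chain L C"
  by (auto simp: is_chain_def chain_def)

lemma is_chain_pair: "x \<in> L \<Longrightarrow> y \<in> L \<Longrightarrow> x \<le> y \<Longrightarrow> is_chain L {x, y}"
  by (rule is_chainI) auto

lemma is_chain_triple:
  "x \<in> L \<Longrightarrow> y \<in> L \<Longrightarrow> z \<in> L \<Longrightarrow> x \<le> y \<Longrightarrow> y \<le> z \<Longrightarrow> is_chain L {x, y, z}"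
  by (rule is_chainI) (auto intro: order_trans)

section \<open>Weights of planar cones\<close>

definition quadrant_cone :: "real \<Rightarrow> real \<Rightarrow> (real \<times> real) set" where
  "quadrant_cone \<alpha> \<beta> = {(x, y). 0 \<le> x \<and> 0 \<le> y \<and> y * cos \<alpha> \<le> x * sin \<alpha> \<and> y * cos \<beta> \<ge> x * sin \<beta>}"

lemma sin_nonneg_iff:
  assumes "- (pi / 2) \<le> x" "x \<le> pi / 2"
  shows "0 \<le> sin x \<longleftrightarrow> 0 \<le> x"
proof
  assume "0 \<le> sin x"
  show "0 \<le> x"
  proof (rule ccontr)
    assume "\<not> 0 \<le> x"
    then have "0 < sin (- x)" using sin_gt_zero[of "- x"] assms by auto
    with \<open>0 \<le> sin x\<close> show False by simp
  qed
next
  assume "0 \<le> x"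
  then show "0 \<le> sin x" using sin_ge_zero assms by auto
qed

lemma unit_vector_in_quadrant_cone_iff:
  assumes "0 \<le> \<beta>" "\<beta> \<le> \<alpha>" "\<alpha> \<le> pi / 2" "0 \<le> \<theta>" "\<theta> \<le> pi / 2"
  shows "(cos \<theta>, sin \<theta>) \<in> quadrant_cone \<alpha> \<beta> \<longleftrightarrow> \<beta> \<le> \<theta> \<and> \<theta> \<le> \<alpha>"
proof -
  have "0 \<le> cos \<theta>" "0 \<le> sin \<theta>" using assms by (auto intro: cos_ge_zero sin_ge_zero)
  moreover have "sin \<theta> * cos \<alpha> \<le> cos \<theta> * sin \<alpha> \<longleftrightarrow> 0 \<le> sin (\<alpha> - \<theta>)"
    by (simp add: sin_diff mult.commute)
  moreover have "sin \<theta> * cos \<beta> \<ge> cos \<theta> * sin \<beta> \<longleftrightarrow> 0 \<le> sin (\<theta> - \<beta>)"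
    by (simp add: sin_diff mult.commute)
  moreover have "0 \<le> sin (\<alpha> - \<theta>) \<longleftrightarrow> \<theta> \<le> \<alpha>" "0 \<le> sin (\<theta> - \<beta>) \<longleftrightarrow> \<beta> \<le> \<theta>"
    using sin_nonneg_iff[of "\<alpha> - \<theta>"] sin_nonneg_iff[of "\<theta> - \<beta>"] assms by auto
  ultimately show ?thesis unfolding quadrant_cone_def by auto
qed

lemma quadrant_cone_eq_iff:
  assumes "0 \<le> \<beta>" "\<beta> \<le> \<alpha>" "\<alpha> \<le> pi / 2" "0 \<le> \<beta>'" "\<beta>' \<le> \<alpha>'" "\<alpha>' \<le> pi / 2"
  shows "quadrant_cone \<alpha> \<beta> = quadrant_cone \<alpha>' \<beta>' \<longleftrightarrow> \<alpha> = \<alpha>' \<and> \<beta> = \<beta>'"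
proof
  assume eq: "quadrant_cone \<alpha> \<beta> = quadrant_cone \<alpha>' \<beta>'"
  \<comment> \<open>test the two cones on the unit vectors at angles \<open>\<alpha>, \<alpha>', \<beta>, \<beta>'\<close>\<close>
  note test = unit_vector_in_quadrant_cone_iff[of \<beta> \<alpha>] unit_vector_in_quadrant_cone_iff[of \<beta>' \<alpha>']
  have "\<alpha> \<le> \<alpha>'" using test[of \<alpha>] eq assms by auto
  moreover have "\<alpha>' \<le> \<alpha>" using test[of \<alpha>'] eq assms by auto
  moreover have "\<beta>' \<le> \<beta>" using test[of \<beta>] eq assms by auto
  moreover have "\<beta> \<le> \<beta>'" using test[of \<beta>'] eq assms by auto
  ultimately show "\<alpha> = \<alpha>' \<and> \<beta> = \<beta>'" by auto
qed simp

lemma cone_weight_quadrant_cone: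
  assumes "0 \<le> \<beta>" "\<beta> \<le> \<alpha>" "\<alpha> \<le> pi / 2"
  shows "cone_weight (quadrant_cone \<alpha> \<beta>) = sin \<alpha> / (sin \<alpha> + cos \<alpha>) - sin \<beta> / (sin \<beta> + cos \<beta>)"
  unfolding cone_weight_def
proof (rule the_equality)
  show "\<exists>\<alpha>' \<beta>'. 0 \<le> \<beta>' \<and> \<beta>' \<le> \<alpha>' \<and> \<alpha>' \<le> pi / 2 \<and>
      quadrant_cone \<alpha> \<beta> = {(x, y). 0 \<le> x \<and> 0 \<le> y \<and> y * cos \<alpha>' \<le> x * sin \<alpha>' \<and> y * cos \<beta>' \<ge> x * sin \<beta>'} \<and>
      sin \<alpha> / (sin \<alpha> + cos \<alpha>) - sin \<beta> / (sin \<beta> + cos \<beta>) =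
        sin \<alpha>' / (sin \<alpha>' + cos \<alpha>') - sin \<beta>' / (sin \<beta>' + cos \<beta>')"
    using assms by (intro exI[of _ \<alpha>] exI[of _ \<beta>]) (simp add: quadrant_cone_def)
  fix c
  assume "\<exists>\<alpha>' \<beta>'. 0 \<le> \<beta>' \<and> \<beta>' \<le> \<alpha>' \<and> \<alpha>' \<le> pi / 2 \<and>
      quadrant_cone \<alpha> \<beta> = {(x, y). 0 \<le> x \<and> 0 \<le> y \<and> y * cos \<alpha>' \<le> x * sin \<alpha>' \<and> y * cos \<beta>' \<ge> x * sin \<beta>'} \<and>
      c = sin \<alpha>' / (sin \<alpha>' + cos \<alpha>') - sin \<beta>' / (sin \<beta>' + cos \<beta>')"
  then obtain \<alpha>' \<beta>' where "0 \<le> \<beta>'" "\<beta>' \<le> \<alpha>'" "\<alpha>' \<le> pi / 2" "quadrant_cone \<alpha> \<beta> = quadrant_cone \<alpha>' \<beta>'"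
     "c = sin \<alpha>' / (sin \<alpha>' + cos \<alpha>') - sin \<beta>' / (sin \<beta>' + cos \<beta>')"
    unfolding quadrant_cone_def by blast
  then show "c = sin \<alpha> / (sin \<alpha> + cos \<alpha>) - sin \<beta> / (sin \<beta> + cos \<beta>)"
    using quadrant_cone_eq_iff[OF assms] by simp
qed

lemma cone_weight_quadrant: "cone_weight {w. 0 \<le> fst w \<and> 0 \<le> snd w} = 1"
proof -
  have "quadrant_cone (pi / 2) 0 = {w. 0 \<le> fst w \<and> 0 \<le> snd w}"
    by (auto simp: quadrant_cone_def)
  then show ?thesis using cone_weight_quadrant_cone[of 0 "pi / 2"] by simp
qed

lemma cone_weight_lower_octant: "cone_weight {w. 0 \<le> fst w \<and> 0 \<le> snd w \<and> snd w \<le> fst w} = 1 / 2"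
proof -
  have "quadrant_cone (pi / 4) 0 = {w. 0 \<le> fst w \<and> 0 \<le> snd w \<and> snd w \<le> fst w}"
    by (auto simp: quadrant_cone_def sin_45 cos_45)
  then show ?thesis using cone_weight_quadrant_cone[of 0 "pi / 4"] by (simp add: sin_45 cos_45)
qed

lemma cone_weight_upper_octant: "cone_weight {w. 0 \<le> fst w \<and> 0 \<le> snd w \<and> fst w \<le> snd w} = 1 / 2"
proof -
  have "quadrant_cone (pi / 2) (pi / 4) = {w. 0 \<le> fst w \<and> 0 \<le> snd w \<and> fst w \<le> snd w}"
    by (auto simp: quadrant_cone_def sin_45 cos_45)
  then show ?thesis using cone_weight_quadrant_cone[of "pi / 4" "pi / 2"] by (simp add: sin_45 cos_45)
qed

section \<open>Planar sets with two Pareto corners\<close>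

lemma extreme_point_of_if_unique_linear_max:
  fixes x :: "real \<times> real" and S :: "(real \<times> real) set"
  assumes "x \<in> S" and le: "\<forall>z\<in>S. c \<bullet> z \<le> c \<bullet> x"
    and eq: "\<forall>z\<in>S. c \<bullet> z = c \<bullet> x \<longrightarrow> z = x"
  shows "x extreme_point_of S"
  unfolding extreme_point_of_def
proof (intro conjI ballI notI)
  show "x \<in> S" by fact
  fix a b assume ab: "a \<in> S" "b \<in> S" "x \<in> open_segment a b"
  then obtain u where u: "0 < u" "u < 1" "x = (1 - u) *\<^sub>R a + u *\<^sub>R b" and "a \<noteq> b"
    unfolding in_segment by auto
  have cx: "c \<bullet> x = (1 - u) * (c \<bullet> a) + u * (c \<bullet> b)" unfolding u(3) by (simp add: inner_add_right)
  have "(1 - u) * (c \<bullet> a) \<le> (1 - u) * (c \<bullet> x)" "u * (c \<bullet> b) \<le> u * (c \<bullet> x)"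
    using le ab u(1,2) by (auto intro: mult_left_mono)
  moreover have "(1 - u) * (c \<bullet> x) + u * (c \<bullet> x) = c \<bullet> x" by (simp add: algebra_simps)
  ultimately have "(1 - u) * (c \<bullet> a) = (1 - u) * (c \<bullet> x)" "u * (c \<bullet> b) = u * (c \<bullet> x)"
    using cx by linarith+
  then have "c \<bullet> a = c \<bullet> x" "c \<bullet> b = c \<bullet> x" using u(1,2) by auto
  then show False using eq ab \<open>a \<noteq> b\<close> by auto
qed

locale two_corners =
  fixes X :: "(real \<times> real) set" and A B S :: real
  assumes left_corner: "(A, S - A) \<in> X" and right_corner: "(S - B, B) \<in> X"
    and bounded: "\<forall>z\<in>X. fst z \<le> A \<and> snd z \<le> B \<and> fst z + snd z \<le> S"
    and S_le: "S \<le> A + B"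
begin

definition normal_cone :: "real \<times> real \<Rightarrow> (real \<times> real) set" where
  "normal_cone z = {w. 0 \<le> fst w \<and> 0 \<le> snd w \<and> w \<bullet> z = (SUP y\<in>convex hull X. w \<bullet> y)}"

lemma hull_bounded:
  assumes "z \<in> convex hull X"
  shows "fst z \<le> A \<and> snd z \<le> B \<and> fst z + snd z \<le> S"
proof -
  let ?R = "{z::real \<times> real. (1, 0) \<bullet> z \<le> A} \<inter> {z. (0, 1) \<bullet> z \<le> B} \<inter> {z. (1, 1) \<bullet> z \<le> S}"
  have "convex ?R" by (intro convex_Int convex_halfspace_le)
  moreover have "X \<subseteq> ?R" using bounded by auto
  ultimately have "convex hull X \<subseteq> ?R" by (rule hull_minimal[rotated])
  then show ?thesis using assms by (cases z) auto
qed

lemma left_corner_extreme: "(A, S - A) extreme_point_of convex hull X"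
  using hull_inc[OF left_corner]
  by (intro extreme_point_of_if_unique_linear_max[where c = "(2, 1)"])
    (auto simp: prod_eq_iff dest!: hull_bounded)

lemma right_corner_extreme: "(S - B, B) extreme_point_of convex hull X"
  using hull_inc[OF right_corner]
  by (intro extreme_point_of_if_unique_linear_max[where c = "(1, 2)"])
    (auto simp: prod_eq_iff dest!: hull_bounded)

lemma left_corner_pareto: "\<forall>z\<in>convex hull X. A \<le> fst z \<and> S - A \<le> snd z \<longrightarrow> z = (A, S - A)"
  by (auto simp: prod_eq_iff dest!: hull_bounded)

lemma right_corner_pareto: "\<forall>z\<in>convex hull X. S - B \<le> fst z \<and> B \<le> snd z \<longrightarrow> z = (S - B, B)"
  by (auto simp: prod_eq_iff dest!: hull_bounded)

lemma edge_in_hull: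
  assumes "S - B \<le> t" "t \<le> A"
  shows "(t, S - t) \<in> closed_segment (S - B, B) (A, S - A)" "(t, S - t) \<in> convex hull X"
proof -
  show edge: "(t, S - t) \<in> closed_segment (S - B, B) (A, S - A)"
  proof (cases "A = S - B")
    case True
    then show ?thesis using assms by auto
  next
    case False
    define u where "u = (t - (S - B)) / (A - (S - B))"
    have "0 \<le> u" "u \<le> 1" using assms False by (auto simp: u_def field_simps)
    have "u * (A - (S - B)) = t - (S - B)" using False by (simp add: u_def)
    then have "(1 - u) * (S - B) + u * A = t" "(1 - u) * B + u * (S - A) = S - t"
      by (simp_all add: algebra_simps)
    then have "(t, S - t) = (1 - u) *\<^sub>R (S - B, B) + u *\<^sub>R (A, S - A)"
      by (simp add: prod_eq_iff)
    then show ?thesis using \<open>0 \<le> u\<close> \<open>u \<le> 1\<close> unfolding closed_segment_def by blast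
  qed
  show "(t, S - t) \<in> convex hull X"
    using edge convex_contains_segment[of "convex hull X"] hull_inc[OF left_corner]
      hull_inc[OF right_corner] by blast
qed

lemma pareto_extreme_point_iff:
  "z extreme_point_of convex hull X \<and> (\<forall>w\<in>convex hull X. fst z \<le> fst w \<and> snd z \<le> snd w \<longrightarrow> w = z)
   \<longleftrightarrow> z = (A, S - A) \<or> z = (S - B, B)"
proof safe
  assume ext: "z extreme_point_of convex hull X"
    and pareto: "\<forall>w\<in>convex hull X. fst z \<le> fst w \<and> snd z \<le> snd w \<longrightarrow> w = z"
    and "z \<noteq> (S - B, B)"
  obtain x y where z: "z = (x, y)" by (cases z)
  have b: "x \<le> A" "y \<le> B" "x + y \<le> S"
    using hull_bounded ext z unfolding extreme_point_of_def by auto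
  \<comment> \<open>a Pareto-maximal point lies on the edge \<open>x + y = S\<close>, and an extreme point of that edge is an
    endpoint\<close>
  define t where "t = max x (S - B)"
  have "S - B \<le> t" "t \<le> A" using b S_le by (auto simp: t_def)
  moreover have "x \<le> t" "y \<le> S - t" using b by (auto simp: t_def)
  ultimately have "(t, S - t) = z" using pareto z edge_in_hull(2)[of t] by simp
  then have "z \<in> closed_segment (S - B, B) (A, S - A)" using edge_in_hull \<open>S - B \<le> t\<close> \<open>t \<le> A\<close>
    by auto
  then show "z = (A, S - A)"
    using ext \<open>z \<noteq> (S - B, B)\<close> hull_inc[OF left_corner] hull_inc[OF right_corner]
    unfolding extreme_point_of_def open_segment_def by auto
qed (use left_corner_extreme right_corner_extreme left_corner_pareto right_corner_pareto in auto)

lemma normal_cone_eq: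
  assumes z: "z \<in> convex hull X"
  shows "normal_cone z = {w. 0 \<le> fst w \<and> 0 \<le> snd w \<and> (\<forall>y\<in>convex hull X. w \<bullet> y \<le> w \<bullet> z)}"
proof -
  have "bdd_above ((\<bullet>) w ` (convex hull X))" if "0 \<le> fst w" "0 \<le> snd w" for w :: "real \<times> real"
  proof (rule bdd_aboveI2)
    fix y assume "y \<in> convex hull X"
    then have "fst y \<le> A" "snd y \<le> B" using hull_bounded by auto
    then show "w \<bullet> y \<le> fst w * A + snd w * B"
      using that by (cases w, cases y) (simp add: add_mono mult_left_mono)
  qed
  then have "w \<bullet> z = (SUP y\<in>convex hull X. w \<bullet> y) \<longleftrightarrow> (\<forall>y\<in>convex hull X. w \<bullet> y \<le> w \<bullet> z)"
    if "0 \<le> fst w" "0 \<le> snd w" for w :: "real \<times> real"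
    using that z cSUP_upper[of _ "convex hull X" "(\<bullet>) w"]
    by (auto intro: cSup_eq_maximum[symmetric])
  then show ?thesis unfolding normal_cone_def by auto
qed

lemma cone_weight_left_corner:
  "cone_weight (normal_cone (A, S - A)) = (if A = S - B then 1 else 1 / 2)"
proof -
  have "(\<forall>y\<in>convex hull X. w \<bullet> y \<le> w \<bullet> (A, S - A)) \<longleftrightarrow> A = S - B \<or> snd w \<le> fst w"
    if w: "0 \<le> fst w" "0 \<le> snd w" for w :: "real \<times> real"
  proof
    assume "\<forall>y\<in>convex hull X. w \<bullet> y \<le> w \<bullet> (A, S - A)"
    then have "w \<bullet> (S - B, B) \<le> w \<bullet> (A, S - A)" using hull_inc[OF right_corner] by blast
    then have "snd w * (A + B - S) \<le> fst w * (A + B - S)" by (cases w) (simp add: algebra_simps)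
    then show "A = S - B \<or> snd w \<le> fst w" using S_le by (cases "A + B - S = 0") auto
  next
    assume h: "A = S - B \<or> snd w \<le> fst w"
    show "\<forall>y\<in>convex hull X. w \<bullet> y \<le> w \<bullet> (A, S - A)"
    proof
      fix y assume "y \<in> convex hull X"
      then have b: "fst y \<le> A" "snd y \<le> B" "fst y + snd y \<le> S" using hull_bounded by auto
      \<comment> \<open>write \<open>w \<bullet> y\<close> as \<open>(fst w - snd w) fst y + snd w (fst y + snd y)\<close>\<close>
      show "w \<bullet> y \<le> w \<bullet> (A, S - A)"
        using h b w mult_left_mono[of "fst y" A "fst w"] mult_left_mono[of "snd y" B "snd w"]
          mult_left_mono[of "fst y" A "fst w - snd w"] mult_left_mono[of "fst y + snd y" S "snd w"]
        by (cases w, cases y) (auto simp: algebra_simps)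
    qed
  qed
  then have "normal_cone (A, S - A) = {w. 0 \<le> fst w \<and> 0 \<le> snd w \<and> (A = S - B \<or> snd w \<le> fst w)}"
    unfolding normal_cone_eq[OF hull_inc[OF left_corner]] by blast
  then show ?thesis using cone_weight_quadrant cone_weight_lower_octant by (cases "A = S - B") simp_all
qed

lemma cone_weight_right_corner:
  "cone_weight (normal_cone (S - B, B)) = (if A = S - B then 1 else 1 / 2)"
proof -
  have "(\<forall>y\<in>convex hull X. w \<bullet> y \<le> w \<bullet> (S - B, B)) \<longleftrightarrow> A = S - B \<or> fst w \<le> snd w"
    if w: "0 \<le> fst w" "0 \<le> snd w" for w :: "real \<times> real"
  proof
    assume "\<forall>y\<in>convex hull X. w \<bullet> y \<le> w \<bullet> (S - B, B)"
    then have "w \<bullet> (A, S - A) \<le> w \<bullet> (S - B, B)" using hull_inc[OF left_corner] by blast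
    then have "fst w * (A + B - S) \<le> snd w * (A + B - S)" by (cases w) (simp add: algebra_simps)
    then show "A = S - B \<or> fst w \<le> snd w" using S_le by (cases "A + B - S = 0") auto
  next
    assume h: "A = S - B \<or> fst w \<le> snd w"
    show "\<forall>y\<in>convex hull X. w \<bullet> y \<le> w \<bullet> (S - B, B)"
    proof
      fix y assume "y \<in> convex hull X"
      then have b: "fst y \<le> A" "snd y \<le> B" "fst y + snd y \<le> S" using hull_bounded by auto
      show "w \<bullet> y \<le> w \<bullet> (S - B, B)"
        using h b w mult_left_mono[of "fst y" A "fst w"] mult_left_mono[of "snd y" B "snd w"]
          mult_left_mono[of "snd y" B "snd w - fst w"] mult_left_mono[of "fst y + snd y" S "fst w"]
        by (cases w, cases y) (auto simp: algebra_simps)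
    qed
  qed
  then have "normal_cone (S - B, B) = {w. 0 \<le> fst w \<and> 0 \<le> snd w \<and> (A = S - B \<or> fst w \<le> snd w)}"
    unfolding normal_cone_eq[OF hull_inc[OF right_corner]] by blast
  then show ?thesis using cone_weight_quadrant cone_weight_upper_octant by (cases "A = S - B") simp_all
qed

end

locale polar =
  fixes L :: "'a::order set" and Frames :: "'a set set" and n :: nat
  assumes polar_space: "polar_space L Frames n"
begin

lemma polar_space_axioms_unfolded:
  shows "meet_semilattice L" "\<forall>F\<in>Frames. subsemilattice L F" "L = \<Union> Frames"
    "\<forall>F\<in>Frames. \<exists>f. bij_betw f F (S2n n) \<and> (\<forall>x\<in>F. \<forall>y\<in>F. x \<le> y \<longleftrightarrow> S2n_le (f x) (f y))"
    "\<forall>C D. is_chain L C \<and> is_chain L D \<longrightarrow> (\<exists>F\<in>Frames. C \<subseteq> F \<and> D \<subseteq> F)"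
    "\<forall>F\<in>Frames. \<forall>G\<in>Frames. \<forall>C D. is_chain L C \<and> is_chain L D \<and> C \<subseteq> F \<and> D \<subseteq> F
        \<and> C \<subseteq> G \<and> D \<subseteq> G \<longrightarrow> (\<exists>\<phi>. order_iso_on \<phi> F G \<and> (\<forall>x\<in>C \<union> D. \<phi> x = x))"
  using polar_space unfolding polar_space_def by - (elim conjE, assumption)+

lemma frame_subset: "F \<in> Frames \<Longrightarrow> F \<subseteq> L"
  using polar_space_axioms_unfolded(3) by blast

lemma frame_meet_closed: "F \<in> Frames \<Longrightarrow> x \<in> F \<Longrightarrow> y \<in> F \<Longrightarrow> meet L x y \<in> F"
  using polar_space_axioms_unfolded(2) unfolding subsemilattice_def by blast

lemma ex_frame_containing_chains:
  "is_chain L C \<Longrightarrow> is_chain L D \<Longrightarrow> \<exists>F\<in>Frames. C \<subseteq> F \<and> D \<subseteq> F"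
  using polar_space_axioms_unfolded(5) by blast

lemma ex_frame_iso_fixing:
  "F \<in> Frames \<Longrightarrow> G \<in> Frames \<Longrightarrow> is_chain L C \<Longrightarrow> is_chain L D \<Longrightarrow>
   C \<subseteq> F \<Longrightarrow> D \<subseteq> F \<Longrightarrow> C \<subseteq> G \<Longrightarrow> D \<subseteq> G \<Longrightarrow>
   \<exists>\<phi>. order_iso_on \<phi> F G \<and> (\<forall>x\<in>C \<union> D. \<phi> x = x)"
  using polar_space_axioms_unfolded(6) by blast

lemma ex_frame_containing: "x \<in> L \<Longrightarrow> y \<in> L \<Longrightarrow> \<exists>F\<in>Frames. x \<in> F \<and> y \<in> F"
  using ex_frame_containing_chains[of "{x}" "{y}"] by (auto intro: is_chainI)

lemma is_meet_meet:
  assumes "x \<in> L" "y \<in> L"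
  shows "is_meet L x y (meet L x y)"
proof -
  obtain z where z: "is_meet L x y z"
    using polar_space_axioms_unfolded(1) assms unfolding meet_semilattice_def by blast
  then have "meet L x y = z"
    unfolding meet_def using is_meet_unique by blast
  with z show ?thesis by simp
qed

lemma meet_closed: "x \<in> L \<Longrightarrow> y \<in> L \<Longrightarrow> meet L x y \<in> L"
  using is_meet_meet is_meet_def by metis

lemma meet_le1: "x \<in> L \<Longrightarrow> y \<in> L \<Longrightarrow> meet L x y \<le> x"
  using is_meet_meet is_meet_def by metis

lemma meet_le2: "x \<in> L \<Longrightarrow> y \<in> L \<Longrightarrow> meet L x y \<le> y"
  using is_meet_meet is_meet_def by metis

lemma meet_greatest: "x \<in> L \<Longrightarrow> y \<in> L \<Longrightarrow> w \<in> L \<Longrightarrow> w \<le> x \<Longrightarrow> w \<le> y \<Longrightarrow> w \<le> meet L x y"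
  using is_meet_meet is_meet_def by metis

lemma meet_eqI:
  "x \<in> L \<Longrightarrow> y \<in> L \<Longrightarrow> z \<in> L \<Longrightarrow> z \<le> x \<Longrightarrow> z \<le> y \<Longrightarrow>
   (\<And>w. w \<in> L \<Longrightarrow> w \<le> x \<Longrightarrow> w \<le> y \<Longrightarrow> w \<le> z) \<Longrightarrow> meet L x y = z"
  by (meson meet_greatest meet_closed meet_le1 meet_le2 order.antisym)

lemma meet_commute: "x \<in> L \<Longrightarrow> y \<in> L \<Longrightarrow> meet L x y = meet L y x"
  by (rule meet_eqI) (auto intro: meet_closed meet_le1 meet_le2 meet_greatest)

lemma meet_absorb1: "x \<in> L \<Longrightarrow> y \<in> L \<Longrightarrow> x \<le> y \<Longrightarrow> meet L x y = x"
  by (rule meet_eqI) auto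

lemma meet_absorb2: "x \<in> L \<Longrightarrow> y \<in> L \<Longrightarrow> y \<le> x \<Longrightarrow> meet L x y = y"
  by (rule meet_eqI) auto

lemma meet_mono_left:
  assumes "x \<in> L" "y \<in> L" "q \<in> L" "x \<le> y"
  shows "meet L x q \<le> meet L y q"
proof -
  have "meet L x q \<le> y" using meet_le1[of x q] assms by (blast intro: order_trans)
  then show ?thesis using meet_greatest meet_closed meet_le2 assms by blast
qed

definition frame_coord :: "'a set \<Rightarrow> 'a \<Rightarrow> nat \<Rightarrow> int" where
  "frame_coord F = (SOME f. bij_betw f F (S2n n) \<and> (\<forall>x\<in>F. \<forall>y\<in>F. x \<le> y \<longleftrightarrow> S2n_le (f x) (f y)))"

definition frame_point :: "'a set \<Rightarrow> (nat \<Rightarrow> int) \<Rightarrow> 'a" where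
  "frame_point F = inv_into F (frame_coord F)"

lemma frame_coord_iso:
  assumes "F \<in> Frames"
  shows "bij_betw (frame_coord F) F (S2n n) \<and>
     (\<forall>x\<in>F. \<forall>y\<in>F. x \<le> y \<longleftrightarrow> S2n_le (frame_coord F x) (frame_coord F y))"
proof -
  have "\<exists>f. bij_betw f F (S2n n) \<and> (\<forall>x\<in>F. \<forall>y\<in>F. x \<le> y \<longleftrightarrow> S2n_le (f x) (f y))"
    using polar_space_axioms_unfolded(4) assms by (rule bspec)
  then show ?thesis unfolding frame_coord_def by (rule someI_ex)
qed

lemma frame_coord_in: "F \<in> Frames \<Longrightarrow> x \<in> F \<Longrightarrow> frame_coord F x \<in> S2n n"
  using frame_coord_iso bij_betwE by blast

lemma frame_coord_le_iff:
  "F \<in> Frames \<Longrightarrow> x \<in> F \<Longrightarrow> y \<in> F \<Longrightarrow> x \<le> y \<longleftrightarrow> S2n_le (frame_coord F x) (frame_coord F y)"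
  using frame_coord_iso by blast

lemma frame_coord_inj: "F \<in> Frames \<Longrightarrow> inj_on (frame_coord F) F"
  using frame_coord_iso bij_betw_def by blast

lemma frame_point_in: "F \<in> Frames \<Longrightarrow> v \<in> S2n n \<Longrightarrow> frame_point F v \<in> F"
  unfolding frame_point_def using frame_coord_iso by (metis bij_betw_def inv_into_into)

lemma frame_coord_point: "F \<in> Frames \<Longrightarrow> v \<in> S2n n \<Longrightarrow> frame_coord F (frame_point F v) = v"
  unfolding frame_point_def using frame_coord_iso by (metis bij_betw_def f_inv_into_f)

lemma frame_point_le_iff:
  "F \<in> Frames \<Longrightarrow> v \<in> S2n n \<Longrightarrow> x \<in> F \<Longrightarrow> frame_point F v \<le> x \<longleftrightarrow> S2n_le v (frame_coord F x)"
  using frame_coord_le_iff[OF _ frame_point_in] frame_coord_point by simp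

lemma le_frame_point_iff:
  "F \<in> Frames \<Longrightarrow> v \<in> S2n n \<Longrightarrow> x \<in> F \<Longrightarrow> x \<le> frame_point F v \<longleftrightarrow> S2n_le (frame_coord F x) v"
  using frame_coord_le_iff[OF _ _ frame_point_in] frame_coord_point by simp

lemma is_join_if_frame_lub:
  assumes F: "F \<in> Frames" and xyz: "x \<in> F" "y \<in> F" "z \<in> F" "x \<le> z" "y \<le> z"
    and lub: "\<forall>u\<in>F. x \<le> u \<and> y \<le> u \<longrightarrow> z \<le> u"
  shows "is_join L x y z"
proof -
  have xL: "x \<in> L" and yL: "y \<in> L" and zL: "z \<in> L" using frame_subset F xyz by auto
  have "z \<le> w" if w: "w \<in> L" "x \<le> w" "y \<le> w" for w
  proof -
    \<comment> \<open>pull \<open>m = z \<and> w\<close> back into \<open>F\<close> along an isomorphism fixing \<open>x, y, z\<close>\<close>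
    define m where "m = meet L z w"
    have mL: "m \<in> L" and mz: "m \<le> z" and mw: "m \<le> w"
      using meet_closed meet_le1 meet_le2 zL w m_def by auto
    have xm: "x \<le> m" and ym: "y \<le> m" using meet_greatest zL w xyz xL yL m_def by auto
    obtain G where G: "G \<in> Frames" "{x,m,z} \<subseteq> G" "{y,m,z} \<subseteq> G"
      using ex_frame_containing_chains[OF is_chain_triple[OF xL mL zL xm mz]
          is_chain_triple[OF yL mL zL ym mz]] by auto
    obtain \<phi> where phi: "order_iso_on \<phi> F G" "\<forall>a\<in>{x,z} \<union> {y,z}. \<phi> a = a"
      using ex_frame_iso_fixing[OF F G(1) is_chain_pair[OF xL zL \<open>x \<le> z\<close>]
          is_chain_pair[OF yL zL \<open>y \<le> z\<close>]] xyz G by auto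
    define m' where "m' = inv_into F \<phi> m"
    have m': "m' \<in> F" "\<phi> m' = m" using order_iso_on_inv_into[OF phi(1)] G m'_def by auto
    have "x \<le> m'" "y \<le> m'"
      using order_iso_on_le_iff[OF phi(1) _ m'(1)] xyz phi(2) m' xm ym by auto
    then have "z \<le> m'" using lub m' by auto
    then have "z \<le> m" using order_iso_on_le_iff[OF phi(1) xyz(3) m'(1)] phi(2) m' by auto
    then show ?thesis using mw by auto
  qed
  then show ?thesis using zL xyz unfolding is_join_def by auto
qed

lemma ex_frame_upper_bound:
  assumes F: "F \<in> Frames" and xy: "x \<in> F" "y \<in> F" and w: "w \<in> L" "x \<le> w" "y \<le> w"
  shows "\<exists>u\<in>F. x \<le> u \<and> y \<le> u"
proof -
  have xL: "x \<in> L" and yL: "y \<in> L" using frame_subset F xy by auto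
  obtain G where G: "G \<in> Frames" "{x,w} \<subseteq> G" "{y,w} \<subseteq> G"
    using ex_frame_containing_chains[OF is_chain_pair[OF xL w(1,2)] is_chain_pair[OF yL w(1,3)]]
    by auto
  obtain \<phi> where phi: "order_iso_on \<phi> F G" "\<forall>a\<in>{x} \<union> {y}. \<phi> a = a"
    using ex_frame_iso_fixing[OF F G(1), of "{x}" "{y}"] xL yL xy G by (auto intro: is_chainI)
  define u where "u = inv_into F \<phi> w"
  have u: "u \<in> F" "\<phi> u = w" using order_iso_on_inv_into[OF phi(1)] G u_def by auto
  have "x \<le> u" "y \<le> u" using order_iso_on_le_iff[OF phi(1) _ u(1)] xy phi(2) u w by auto
  then show ?thesis using u by auto
qed

lemma frame_coord_compatible:
  assumes F: "F \<in> Frames" and xy: "x \<in> F" "y \<in> F" and w: "w \<in> L" "x \<le> w" "y \<le> w"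
  shows "S2n_compatible (frame_coord F x) (frame_coord F y)"
proof -
  obtain u where "u \<in> F" "x \<le> u" "y \<le> u" using ex_frame_upper_bound[OF assms] by auto
  then show ?thesis
    using frame_coord_le_iff[OF F] xy by (auto intro: S2n_compatible_if_bounded)
qed

lemma is_join_frame_point:
  assumes F: "F \<in> Frames" and xy: "x \<in> F" "y \<in> F"
    and c: "S2n_compatible (frame_coord F x) (frame_coord F y)"
  shows "is_join L x y (frame_point F (S2n_join (frame_coord F x) (frame_coord F y)))"
proof -
  let ?v = "S2n_join (frame_coord F x) (frame_coord F y)"
  have v: "?v \<in> S2n n" using S2n_join_in frame_coord_in F xy by auto
  show ?thesis
  proof (rule is_join_if_frame_lub[OF F xy frame_point_in[OF F v]])
    show "x \<le> frame_point F ?v" "y \<le> frame_point F ?v"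
      using le_frame_point_iff[OF F v] xy S2n_join_ge1 S2n_join_ge2[OF c] by auto
    show "\<forall>u\<in>F. x \<le> u \<and> y \<le> u \<longrightarrow> frame_point F ?v \<le> u"
      using frame_point_le_iff[OF F v] frame_coord_le_iff[OF F] xy S2n_join_least by auto
  qed
qed

lemma frame_coord_meet:
  assumes F: "F \<in> Frames" and xy: "x \<in> F" "y \<in> F"
  shows "frame_coord F (meet L x y) = S2n_meet (frame_coord F x) (frame_coord F y)"
proof -
  let ?v = "S2n_meet (frame_coord F x) (frame_coord F y)"
  have v: "?v \<in> S2n n" using S2n_meet_in frame_coord_in F xy by auto
  have z: "frame_point F ?v \<in> L" using frame_point_in[OF F v] frame_subset[OF F] by auto
  have m: "meet L x y \<in> F" using frame_meet_closed F xy by auto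
  have xyL: "x \<in> L" "y \<in> L" using frame_subset F xy by auto
  have "meet L x y = frame_point F ?v"
  proof (rule meet_eqI[OF xyL z])
    show "frame_point F ?v \<le> x" "frame_point F ?v \<le> y"
      using frame_point_le_iff[OF F v] xy S2n_meet_le1 S2n_meet_le2 by auto
    fix w assume w: "w \<in> L" "w \<le> x" "w \<le> y"
    then have "w \<le> meet L x y" using meet_greatest xyL by auto
    moreover have "meet L x y \<le> frame_point F ?v"
    proof -
      have "S2n_le (frame_coord F (meet L x y)) (frame_coord F x)"
        "S2n_le (frame_coord F (meet L x y)) (frame_coord F y)"
        using frame_coord_le_iff[OF F m] xy meet_le1[OF xyL] meet_le2[OF xyL] by auto
      then show ?thesis using le_frame_point_iff[OF F v m] S2n_meet_greatest by auto
    qed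
    ultimately show "w \<le> frame_point F ?v" by auto
  qed
  then show ?thesis using frame_coord_point[OF F v] by simp
qed

lemma chain_below_embeds_in_frame:
  assumes F: "F \<in> Frames" "x \<in> F" and C: "is_chain L C" "\<forall>y\<in>C. y \<le> x"
  shows "\<exists>\<psi>. inj_on \<psi> C \<and> \<psi> ` C \<subseteq> F \<and> (\<forall>a\<in>C. \<forall>b\<in>C. a \<le> b \<longrightarrow> \<psi> a \<le> \<psi> b)
     \<and> (\<forall>c\<in>C. \<psi> c \<le> x)"
proof -
  have xL: "x \<in> L" using frame_subset F by auto
  have "is_chain L (insert x C)" using C xL unfolding is_chain_def chain_def by auto
  then obtain G where G: "G \<in> Frames" "insert x C \<subseteq> G"
    using ex_frame_containing_chains by blast
  obtain \<phi> where phi: "order_iso_on \<phi> F G" "\<phi> x = x"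
    using ex_frame_iso_fixing[OF F(1) G(1), of "{x}" "{x}"] xL F G by (auto intro: is_chainI)
  let ?\<psi> = "inv_into F \<phi>"
  have mono: "?\<psi> a \<le> ?\<psi> b" if "a \<in> G" "b \<in> G" "a \<le> b" for a b
    using order_iso_on_le_iff[OF phi(1)] order_iso_on_inv_into[OF phi(1)] that by metis
  have "inj_on ?\<psi> G" using phi(1) unfolding order_iso_on_def bij_betw_def
    by (intro inj_on_inv_into) auto
  moreover have "?\<psi> x = x"
    using phi F unfolding order_iso_on_def bij_betw_def by (metis inv_into_f_f)
  moreover have "\<forall>a\<in>C. \<forall>b\<in>C. a \<le> b \<longrightarrow> ?\<psi> a \<le> ?\<psi> b"
    using G(2) mono by blast
  moreover have "\<forall>c\<in>C. ?\<psi> c \<le> x"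
    using G(2) C(2) mono[of _ x] \<open>?\<psi> x = x\<close> by force
  ultimately show ?thesis
    using G order_iso_on_inv_into(1)[OF phi(1)]
    by (intro exI[of _ ?\<psi>]) (auto intro: inj_on_subset)
qed

lemma card_chain_below_le:
  assumes F: "F \<in> Frames" "x \<in> F" and C: "is_chain L C" "finite C" "\<forall>y\<in>C. y \<le> x"
  shows "card C \<le> S2n_rank n (frame_coord F x) + 1"
proof -
  obtain \<psi> where \<psi>: "inj_on \<psi> C" "\<psi> ` C \<subseteq> F" "\<forall>a\<in>C. \<forall>b\<in>C. a \<le> b \<longrightarrow> \<psi> a \<le> \<psi> b"
    "\<forall>c\<in>C. \<psi> c \<le> x"
    using chain_below_embeds_in_frame[OF F C(1,3)] by blast
  let ?D = "frame_coord F ` \<psi> ` C"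
  have "card ?D = card C"
    using \<psi>(1,2) inj_on_subset[OF frame_coord_inj[OF F(1)]] by (simp add: card_image)
  moreover have "card ?D \<le> S2n_rank n (frame_coord F x) + 1"
  proof (rule S2n_chain_card_le)
    show "\<forall>a\<in>?D. \<forall>b\<in>?D. S2n_le a b \<or> S2n_le b a"
    proof (intro ballI)
      fix a b assume "a \<in> ?D" "b \<in> ?D"
      then obtain c d where cd: "c \<in> C" "d \<in> C" "a = frame_coord F (\<psi> c)" "b = frame_coord F (\<psi> d)"
        by blast
      have "c \<le> d \<or> d \<le> c" using C(1) cd(1,2) unfolding is_chain_def chain_def by auto
      then have "\<psi> c \<le> \<psi> d \<or> \<psi> d \<le> \<psi> c" using \<psi>(3) cd(1,2) by blast
      moreover have "\<psi> c \<in> F" "\<psi> d \<in> F" using \<psi>(2) cd(1,2) by auto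
      ultimately show "S2n_le a b \<or> S2n_le b a" using frame_coord_le_iff[OF F(1)] cd(3,4) by auto
    qed
    show "\<forall>d\<in>?D. S2n_le d (frame_coord F x)"
      using \<psi>(2,4) frame_coord_le_iff[OF F(1) _ F(2)] by auto
  qed (use C(2) \<psi>(2) frame_coord_in[OF F(1)] in auto)
  ultimately show ?thesis by simp
qed

lemma ex_chain_below_card:
  assumes F: "F \<in> Frames" "x \<in> F"
  shows "\<exists>C. is_chain L C \<and> finite C \<and> (\<forall>y\<in>C. y \<le> x) \<and> card C = S2n_rank n (frame_coord F x) + 1"
proof -
  obtain D where D: "finite D" "D \<subseteq> S2n n" "\<forall>a\<in>D. \<forall>b\<in>D. S2n_le a b \<or> S2n_le b a"
     "\<forall>d\<in>D. S2n_le d (frame_coord F x)" "card D = S2n_rank n (frame_coord F x) + 1"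
    using S2n_ex_chain_card[OF frame_coord_in[OF F]] by blast
  let ?C = "frame_point F ` D"
  have point_le_iff: "frame_point F v \<le> frame_point F w \<longleftrightarrow> S2n_le v w" if "v \<in> D" "w \<in> D" for v w
    using frame_point_le_iff[OF F(1) _ frame_point_in[OF F(1)]] frame_coord_point[OF F(1)] that D(2)
    by auto
  have "inj_on (frame_point F) D"
  proof (rule inj_onI)
    fix v w assume "v \<in> D" "w \<in> D" "frame_point F v = frame_point F w"
    then show "v = w" using frame_coord_point[OF F(1)] D(2) by (metis subsetD)
  qed
  then have "card ?C = card D" by (rule card_image)
  moreover have "is_chain L ?C"
  proof (rule is_chainI)
    show "?C \<subseteq> L" using frame_point_in[OF F(1)] frame_subset[OF F(1)] D(2) by auto
    show "\<forall>a\<in>?C. \<forall>b\<in>?C. a \<le> b \<or> b \<le> a" using D(3) point_le_iff by auto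
  qed
  moreover have "\<forall>y\<in>?C. y \<le> x" using D(2,4) frame_point_le_iff[OF F(1) _ F(2)] by auto
  ultimately show ?thesis using D(1,5) by (intro exI[of _ ?C]) simp
qed

lemma rk_eq_S2n_rank:
  assumes "F \<in> Frames" "x \<in> F"
  shows "rk L x = S2n_rank n (frame_coord F x)"
proof -
  let ?s = "S2n_rank n (frame_coord F x)"
  let ?Cs = "{card C | C. is_chain L C \<and> finite C \<and> (\<forall>y\<in>C. y \<le> x)}"
  have "?Cs \<subseteq> {..?s + 1}" using card_chain_below_le[OF assms] by auto
  moreover have "?s + 1 \<in> ?Cs"
  proof -
    obtain C where "is_chain L C" "finite C" "\<forall>y\<in>C. y \<le> x" "card C = ?s + 1"
      using ex_chain_below_card[OF assms] by blast
    then show ?thesis unfolding mem_Collect_eq by metis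
  qed
  ultimately have "Max ?Cs = ?s + 1"
    by (intro Max_eqI) (auto intro: finite_subset)
  then show ?thesis unfolding rk_def by simp
qed

lemma rk_mono:
  assumes "x \<in> L" "y \<in> L" "x \<le> y"
  shows "rk L x \<le> rk L y"
proof -
  obtain F where F: "F \<in> Frames" "x \<in> F" "y \<in> F" using ex_frame_containing assms by blast
  show ?thesis
    using rk_eq_S2n_rank[OF F(1,2)] rk_eq_S2n_rank[OF F(1,3)] frame_coord_le_iff[OF F] assms
      S2n_rank_mono by auto
qed

lemma rk_strict_mono:
  assumes "x \<in> L" "y \<in> L" "x < y"
  shows "rk L x < rk L y"
proof -
  obtain F where F: "F \<in> Frames" "x \<in> F" "y \<in> F" using ex_frame_containing assms by blast
  have "frame_coord F x \<noteq> frame_coord F y" using frame_coord_inj[OF F(1)] F assms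
    by (metis inj_onD order.irrefl)
  then show ?thesis
    using rk_eq_S2n_rank[OF F(1,2)] rk_eq_S2n_rank[OF F(1,3)] frame_coord_le_iff[OF F] assms
      S2n_rank_strict_mono frame_coord_in F by auto
qed

lemma eq_if_le_rk_eq: "x \<in> L \<Longrightarrow> y \<in> L \<Longrightarrow> x \<le> y \<Longrightarrow> rk L x = rk L y \<Longrightarrow> x = y"
  using rk_strict_mono by fastforce

lemma has_joinI:
  assumes "x \<in> L" "y \<in> L" "w \<in> L" "x \<le> w" "y \<le> w"
  shows "has_join L x y"
proof -
  obtain F where F: "F \<in> Frames" "x \<in> F" "y \<in> F" using ex_frame_containing assms by blast
  show ?thesis
    using is_join_frame_point[OF F frame_coord_compatible[OF F assms(3-5)]]
    unfolding has_join_def by blast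
qed

lemma join_closed: "has_join L x y \<Longrightarrow> join L x y \<in> L"
  using is_join_join is_join_def by metis

lemma join_ge1: "has_join L x y \<Longrightarrow> x \<le> join L x y"
  using is_join_join is_join_def by metis

lemma join_ge2: "has_join L x y \<Longrightarrow> y \<le> join L x y"
  using is_join_join is_join_def by metis

lemma join_least: "has_join L x y \<Longrightarrow> w \<in> L \<Longrightarrow> x \<le> w \<Longrightarrow> y \<le> w \<Longrightarrow> join L x y \<le> w"
  using is_join_join is_join_def by metis

lemma join_eq_if_between:
  assumes xL: "x \<in> L" and h: "has_join L x y" and a: "a \<in> L" "y \<le> a" "a \<le> join L x y"
  shows "has_join L x a" "join L x a = join L x y"
proof -
  show ha: "has_join L x a" using has_joinI[OF xL a(1) join_closed[OF h] join_ge1[OF h] a(3)] .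
  show "join L x a = join L x y"
  proof (rule order.antisym)
    show "join L x a \<le> join L x y" using join_least[OF ha join_closed[OF h] join_ge1[OF h] a(3)] .
    have "y \<le> join L x a" using a(2) join_ge2[OF ha] by (rule order_trans)
    then show "join L x y \<le> join L x a" by (rule join_least[OF h join_closed[OF ha] join_ge1[OF ha]])
  qed
qed

lemma frame_coord_join:
  assumes F: "F \<in> Frames" and xy: "x \<in> F" "y \<in> F" and h: "has_join L x y"
  shows "join L x y \<in> F" "frame_coord F (join L x y) = S2n_join (frame_coord F x) (frame_coord F y)"
proof -
  let ?v = "S2n_join (frame_coord F x) (frame_coord F y)"
  have v: "?v \<in> S2n n" using S2n_join_in frame_coord_in F xy by auto
  have "S2n_compatible (frame_coord F x) (frame_coord F y)"
    using frame_coord_compatible[OF F xy join_closed[OF h] join_ge1[OF h] join_ge2[OF h]] .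
  then have j: "join L x y = frame_point F ?v" using join_eqI is_join_frame_point[OF F xy] by blast
  show "join L x y \<in> F" using j frame_point_in[OF F v] by simp
  show "frame_coord F (join L x y) = ?v" using j frame_coord_point[OF F v] by simp
qed

lemma rk_join_meet:
  assumes xy: "x \<in> L" "y \<in> L" and h: "has_join L x y"
  shows "rk L (join L x y) + rk L (meet L x y) = rk L x + rk L y"
proof -
  obtain F where F: "F \<in> Frames" "x \<in> F" "y \<in> F" using ex_frame_containing xy by blast
  have "S2n_compatible (frame_coord F x) (frame_coord F y)"
    using frame_coord_compatible[OF F join_closed[OF h] join_ge1[OF h] join_ge2[OF h]] .
  then show ?thesis
    using S2n_rank_join_meet frame_coord_join[OF F h] frame_coord_meet[OF F]
      rk_eq_S2n_rank[OF F(1)] frame_meet_closed[OF F] F(2,3) by simp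
qed

subsection \<open>Covering relation and distance\<close>

lemma rk_covers:
  assumes cv: "covers L x y"
  shows "rk L y = Suc (rk L x)"
proof -
  have xy: "x \<in> L" "y \<in> L" "x < y" using cv by (auto simp: covers_def)
  obtain F where F: "F \<in> Frames" "x \<in> F" "y \<in> F" using ex_frame_containing xy by blast
  have "S2n_le (frame_coord F x) (frame_coord F y)" "frame_coord F x \<noteq> frame_coord F y"
    using frame_coord_le_iff[OF F] frame_coord_inj[OF F(1)] F xy by (auto dest: inj_onD)
  then obtain Z where Z: "Z \<in> S2n n" "S2n_le (frame_coord F x) Z" "S2n_le Z (frame_coord F y)"
      "Z \<noteq> frame_coord F x" "S2n_rank n Z = S2n_rank n (frame_coord F x) + 1"
    using S2n_ex_rank_Suc_between frame_coord_in F by blast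
  define z where "z = frame_point F Z"
  have "z \<in> L" "x \<le> z" "z \<le> y" "x \<noteq> z"
    using frame_point_in[OF F(1) Z(1)] frame_subset[OF F(1)] frame_point_le_iff[OF F(1) Z(1) F(3)]
      le_frame_point_iff[OF F(1) Z(1) F(2)] frame_coord_point[OF F(1) Z(1)] Z(2-4) z_def by auto
  then have "z = y" using cv unfolding covers_def by (auto simp: order.order_iff_strict)
  then show ?thesis
    using Z(5) rk_eq_S2n_rank[OF F(1,2)] rk_eq_S2n_rank[OF F(1,3)] frame_coord_point[OF F(1) Z(1)] z_def
    by simp
qed

lemma rk_meet_covers:
  assumes cv: "covers L x y" and q: "q \<in> L"
  shows "rk L (meet L x q) \<le> rk L (meet L y q)" "rk L (meet L y q) \<le> rk L (meet L x q) + 1"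
proof -
  have xy: "x \<in> L" "y \<in> L" "x \<le> y" using cv by (auto simp: covers_def)
  show "rk L (meet L x q) \<le> rk L (meet L y q)"
    using rk_mono meet_mono_left meet_closed xy q by auto
  \<comment> \<open>by modularity, \<open>x \<or> (y \<and> q)\<close> has rank at most that of \<open>y\<close>\<close>
  define a where "a = meet L y q"
  have a: "a \<in> L" "a \<le> y" "a \<le> q" using meet_closed meet_le1 meet_le2 xy q a_def by auto
  have h: "has_join L x a" using has_joinI[OF xy(1) a(1) xy(2) xy(3) a(2)] .
  have "meet L x a = meet L x q"
  proof (rule meet_eqI[OF xy(1) a(1) meet_closed[OF xy(1) q]])
    show "meet L x q \<le> x" using meet_le1 xy q by auto
    show "meet L x q \<le> a" unfolding a_def using meet_mono_left xy q by auto
    fix w assume "w \<in> L" "w \<le> x" "w \<le> a"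
    then show "w \<le> meet L x q" using meet_greatest xy q a by (meson order_trans)
  qed
  moreover have "rk L (join L x a) \<le> rk L y"
    using rk_mono join_closed[OF h] xy join_least[OF h xy(2) xy(3) a(2)] by auto
  ultimately show "rk L (meet L y q) \<le> rk L (meet L x q) + 1"
    using rk_join_meet[OF xy(1) a(1) h] rk_covers[OF cv] a_def by simp
qed

definition rk_dist :: "'a \<Rightarrow> 'a \<Rightarrow> int" where
  "rk_dist x y = int (rk L x) + int (rk L y) - 2 * int (rk L (meet L x y))"

lemma rk_dist_self: "x \<in> L \<Longrightarrow> rk_dist x x = 0"
  unfolding rk_dist_def using meet_absorb1[of x x] by simp

lemma rk_dist_commute: "x \<in> L \<Longrightarrow> y \<in> L \<Longrightarrow> rk_dist x y = rk_dist y x"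
  unfolding rk_dist_def using meet_commute by simp

lemma rk_dist_adj_le: "adj L x y \<Longrightarrow> q \<in> L \<Longrightarrow> rk_dist x q \<le> rk_dist y q + 1"
  unfolding adj_def rk_dist_def using rk_meet_covers rk_covers by fastforce

lemma rk_dist_le_cpath_length: "cpath L xs a b \<Longrightarrow> rk_dist a b \<le> int (length xs) - 1"
proof (induction xs arbitrary: a)
  case Nil
  then show ?case by (simp add: cpath_def)
next
  case (Cons x ys)
  have b: "b \<in> L" using Cons.prems unfolding cpath_def by (metis last_in_set subsetD)
  show ?case
  proof (cases "ys = []")
    case True
    then show ?thesis using Cons.prems rk_dist_self b by (auto simp: cpath_def)
  next
    case False
    then have "cpath L ys (hd ys) b" "adj L a (hd ys)"
      using Cons.prems unfolding cpath_iff_successively by (auto simp: successively_Cons)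
    then show ?thesis using Cons.IH rk_dist_adj_le[of a "hd ys" b] b by fastforce
  qed
qed

lemma ex_cpath_up:
  "x \<in> L \<Longrightarrow> y \<in> L \<Longrightarrow> x \<le> y \<Longrightarrow> \<exists>xs. cpath L xs x y \<and> length xs = rk L y - rk L x + 1"
proof (induction "rk L y - rk L x" arbitrary: x)
  case 0
  then have "x = y" using rk_mono eq_if_le_rk_eq by (metis diff_is_0_eq le_antisym)
  then show ?case using 0 by (intro exI[of _ "[x]"]) (auto simp: cpath_def)
next
  case (Suc k)
  then have xy: "x < y" by (auto simp: order.order_iff_strict)
  \<comment> \<open>an element of least rank strictly above \<open>x\<close> and below \<open>y\<close> covers \<open>x\<close>\<close>
  obtain z where z: "z \<in> L" "x < z" "z \<le> y"
    and least: "\<forall>w. w \<in> L \<and> x < w \<and> w \<le> y \<longrightarrow> rk L z \<le> rk L w"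
    using ex_has_least_nat[of "\<lambda>z. z \<in> L \<and> x < z \<and> z \<le> y" y "rk L"] Suc xy by blast
  have cv: "covers L x z"
    unfolding covers_def using Suc.prems z least rk_strict_mono by fastforce
  then have "k = rk L y - rk L z" using Suc.hyps(2) rk_covers by simp
  then obtain zs where zs: "cpath L zs z y" "length zs = rk L y - rk L z + 1"
    using Suc.hyps(1) Suc.prems z by blast
  have "cpath L (x # zs) x y" using zs(1) cv Suc.prems unfolding cpath_iff_successively adj_def
    by (auto simp: successively_Cons)
  moreover have "length (x # zs) = rk L y - rk L x + 1" using zs(2) rk_covers[OF cv] Suc.hyps(2)
    by simp
  ultimately show ?case by blast
qed

lemma ex_cpath_rk_dist:
  assumes "x \<in> L" "y \<in> L"
  shows "\<exists>xs. cpath L xs x y \<and> int (length xs) = rk_dist x y + 1"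
proof -
  define m where "m = meet L x y"
  have m: "m \<in> L" "m \<le> x" "m \<le> y" using meet_closed meet_le1 meet_le2 assms m_def by auto
  obtain xs where xs: "cpath L xs m x" "length xs = rk L x - rk L m + 1"
    using ex_cpath_up m assms by blast
  obtain ys where ys: "cpath L ys m y" "length ys = rk L y - rk L m + 1"
    using ex_cpath_up m assms by blast
  have "cpath L (rev xs @ tl ys) x y" using cpath_append[OF cpath_rev[OF xs(1)] ys(1)] .
  moreover have "rk L m \<le> rk L x" "rk L m \<le> rk L y" using rk_mono m assms by auto
  ultimately show ?thesis using xs(2) ys(2) cpath_append_length[OF ys(1), of "rev xs"]
    unfolding rk_dist_def m_def by (intro exI[of _ "rev xs @ tl ys"]) auto
qed

lemma rk_dist_triangle:
  assumes "p \<in> L" "q \<in> L" "u \<in> L"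
  shows "rk_dist p q \<le> rk_dist p u + rk_dist u q"
proof -
  obtain xs where xs: "cpath L xs p u" "int (length xs) = rk_dist p u + 1"
    using ex_cpath_rk_dist assms by blast
  obtain ys where ys: "cpath L ys u q" "int (length ys) = rk_dist u q + 1"
    using ex_cpath_rk_dist assms by blast
  have "length ys \<ge> 1" using ys(1) by (cases ys) (auto simp: cpath_def)
  then show ?thesis
    using rk_dist_le_cpath_length[OF cpath_append[OF xs(1) ys(1)]] xs(2) ys(2)
      cpath_append_length[OF ys(1), of xs] by simp
qed

lemma shortest_cpath_iff:
  assumes "x \<in> L" "y \<in> L"
  shows "shortest_cpath L xs x y \<longleftrightarrow> cpath L xs x y \<and> int (length xs) = rk_dist x y + 1"
proof -
  obtain zs where "cpath L zs x y" "int (length zs) = rk_dist x y + 1"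
    using ex_cpath_rk_dist assms by blast
  then show ?thesis unfolding shortest_cpath_def using rk_dist_le_cpath_length by fastforce
qed

lemma Ipq_iff:
  assumes pq: "p \<in> L" "q \<in> L"
  shows "u \<in> Ipq L p q \<longleftrightarrow> u \<in> L \<and> rk_dist p u + rk_dist u q = rk_dist p q"
proof
  assume "u \<in> Ipq L p q"
  then obtain xs where xs: "cpath L xs p q" "int (length xs) = rk_dist p q + 1" "u \<in> set xs"
    unfolding Ipq_def using shortest_cpath_iff[OF pq] by blast
  then obtain i where i: "i < length xs" "xs ! i = u" by (metis in_set_conv_nth)
  have "u \<in> L" using xs(1,3) unfolding cpath_def by auto
  moreover have "rk_dist p u \<le> int (Suc i) - 1" "rk_dist u q \<le> int (length xs - i) - 1"
    using rk_dist_le_cpath_length[OF cpath_take_drop(1)[OF xs(1) i(1)]]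
      rk_dist_le_cpath_length[OF cpath_take_drop(2)[OF xs(1) i(1)]] i by auto
  ultimately show "u \<in> L \<and> rk_dist p u + rk_dist u q = rk_dist p q"
    using rk_dist_triangle[OF pq] xs(2) i(1) by fastforce
next
  assume u: "u \<in> L \<and> rk_dist p u + rk_dist u q = rk_dist p q"
  obtain xs where xs: "cpath L xs p u" "int (length xs) = rk_dist p u + 1"
    using ex_cpath_rk_dist pq u by blast
  obtain ys where ys: "cpath L ys u q" "int (length ys) = rk_dist u q + 1"
    using ex_cpath_rk_dist pq u by blast
  have "length ys \<ge> 1" using ys(1) by (cases ys) (auto simp: cpath_def)
  then have "shortest_cpath L (xs @ tl ys) p q"
    using shortest_cpath_iff[OF pq] cpath_append[OF xs(1) ys(1)] xs(2) ys(2) u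
      cpath_append_length[OF ys(1), of xs] by simp
  moreover have "u \<in> set (xs @ tl ys)" using xs(1) unfolding cpath_def by auto
  ultimately show "u \<in> Ipq L p q" unfolding Ipq_def by blast
qed

lemma Ipq_commute: "p \<in> L \<Longrightarrow> q \<in> L \<Longrightarrow> Ipq L q p = Ipq L p q"
  using Ipq_iff rk_dist_commute by auto

subsection \<open>Left joins\<close>

lemma right_join_eq_left_join: "p \<in> L \<Longrightarrow> q \<in> L \<Longrightarrow> right_join L p q = left_join L q p"
  unfolding right_join_def left_join_def using meet_commute by simp

definition left_candidates :: "'a \<Rightarrow> 'a \<Rightarrow> 'a set" where
  "left_candidates p q = {v \<in> L. meet L p q \<le> v \<and> v \<le> q \<and> has_join L p v}"

lemma meet_in_left_candidates: "p \<in> L \<Longrightarrow> q \<in> L \<Longrightarrow> meet L p q \<in> left_candidates p q"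
  unfolding left_candidates_def
  using meet_closed meet_le1 meet_le2 has_joinI[of p "meet L p q" p] by auto

lemma join_in_left_candidates:
  assumes pq: "p \<in> L" "q \<in> L" and v1: "v1 \<in> left_candidates p q" and v2: "v2 \<in> left_candidates p q"
  shows "has_join L v1 v2" "join L v1 v2 \<in> left_candidates p q"
proof -
  define m where "m = meet L p q"
  have v1L: "v1 \<in> L" "m \<le> v1" "v1 \<le> q" "has_join L p v1"
    using v1 unfolding left_candidates_def m_def by auto
  have v2L: "v2 \<in> L" "m \<le> v2" "v2 \<le> q" "has_join L p v2"
    using v2 unfolding left_candidates_def m_def by auto
  show hj: "has_join L v1 v2" using has_joinI[OF v1L(1) v2L(1) pq(2) v1L(3) v2L(3)] .
  define w where "w = join L v1 v2"
  have w: "w \<in> L" "v1 \<le> w" "v2 \<le> w" "w \<le> q"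
    using join_closed join_ge1 join_ge2 join_least hj pq v1L v2L w_def by auto
  define z where "z = join L p v2"
  have z: "z \<in> L" "p \<le> z" "v2 \<le> z" using join_closed join_ge1 join_ge2 v2L z_def by auto
  \<comment> \<open>in a frame containing \<open>v1 \<le> w\<close> and \<open>p \<le> p \<or> v2\<close>, the compatibility of \<open>p\<close> and \<open>w\<close>
    is checked coordinatewise, using \<open>w = v1 \<or> (w \<and> (p \<or> v2))\<close>\<close>
  obtain H where H: "H \<in> Frames" "{v1, w} \<subseteq> H" "{p, z} \<subseteq> H"
    using ex_frame_containing_chains[OF is_chain_pair[OF v1L(1) w(1) w(2)] is_chain_pair[OF pq(1) z(1,2)]]
    by blast
  have inH: "v1 \<in> H" "w \<in> H" "p \<in> H" "z \<in> H" using H by auto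
  define a where "a = meet L w z"
  have a: "a \<in> H" "a \<in> L" "a \<le> w" "v2 \<le> a"
    using frame_meet_closed[OF H(1) inH(2,4)] meet_closed meet_le1 meet_greatest w z v2L a_def
    by auto
  have "has_join L v1 a" "join L v1 a = w"
    using join_eq_if_between[OF v1L(1) hj a(2,4)] a(3) w_def by auto
  then have W: "frame_coord H w = S2n_join (frame_coord H v1) (frame_coord H a)"
    using frame_coord_join(2)[OF H(1) inH(1) a(1)] by simp
  have A: "frame_coord H a = S2n_meet (frame_coord H w) (frame_coord H z)"
    using frame_coord_meet[OF H(1) inH(2,4)] a_def by simp
  have pv1: "S2n_compatible (frame_coord H p) (frame_coord H v1)"
    using frame_coord_compatible[OF H(1) inH(3,1) join_closed[OF v1L(4)] join_ge1[OF v1L(4)]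
        join_ge2[OF v1L(4)]] .
  have pz: "S2n_le (frame_coord H p) (frame_coord H z)" using frame_coord_le_iff[OF H(1) inH(3,4)] z
    by simp
  have v1w: "S2n_le (frame_coord H v1) (frame_coord H w)"
    using frame_coord_le_iff[OF H(1) inH(1,2)] w by simp
  have "S2n_compatible (frame_coord H p) (frame_coord H w)"
    using S2n_compatible_if_join_meet[OF pv1 pz v1w W[unfolded A]] .
  then have "has_join L p w"
    using is_join_frame_point[OF H(1) inH(3,2)] unfolding has_join_def by blast
  then show "join L v1 v2 \<in> left_candidates p q"
    unfolding left_candidates_def using w v1L(2) m_def w_def by (auto intro: order_trans)
qed

lemma ex_greatest_left_candidate:
  assumes pq: "p \<in> L" "q \<in> L"
  shows "\<exists>g\<in>left_candidates p q. \<forall>v\<in>left_candidates p q. v \<le> g"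
proof -
  \<comment> \<open>a candidate of maximal rank absorbs every other candidate by the join-closure\<close>
  obtain g where g: "g \<in> left_candidates p q"
    and max: "\<forall>v. v \<in> left_candidates p q \<longrightarrow> rk L v \<le> rk L g"
    using ex_has_greatest_nat[of "\<lambda>v. v \<in> left_candidates p q" "meet L p q" "rk L" "Suc (rk L q)"]
      meet_in_left_candidates[OF pq] rk_mono pq unfolding left_candidates_def by fastforce
  have "v \<le> g" if v: "v \<in> left_candidates p q" for v
  proof -
    have h: "has_join L v g" "join L v g \<in> left_candidates p q"
      using join_in_left_candidates[OF pq v g] by auto
    have gL: "g \<in> L" using g unfolding left_candidates_def by auto
    have "join L v g = g"
      using eq_if_le_rk_eq[OF gL join_closed[OF h(1)] join_ge2[OF h(1)]] max h(2)
        rk_mono[OF gL join_closed[OF h(1)] join_ge2[OF h(1)]] by fastforce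
    then show ?thesis using join_ge1[OF h(1)] by simp
  qed
  then show ?thesis using g by blast
qed

definition left_max :: "'a \<Rightarrow> 'a \<Rightarrow> 'a" where
  "left_max p q = (SOME g. g \<in> left_candidates p q \<and> (\<forall>v\<in>left_candidates p q. v \<le> g))"

lemma left_max_is_greatest:
  assumes "p \<in> L" "q \<in> L"
  shows "left_max p q \<in> left_candidates p q" "\<forall>v\<in>left_candidates p q. v \<le> left_max p q"
proof -
  obtain g where "g \<in> left_candidates p q \<and> (\<forall>v\<in>left_candidates p q. v \<le> g)"
    using ex_greatest_left_candidate[OF assms] by blast
  then have "left_max p q \<in> left_candidates p q \<and> (\<forall>v\<in>left_candidates p q. v \<le> left_max p q)"
    unfolding left_max_def by (rule someI)
  then show "left_max p q \<in> left_candidates p q" "\<forall>v\<in>left_candidates p q. v \<le> left_max p q"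
    by auto
qed

lemma left_join_eq:
  assumes pq: "p \<in> L" "q \<in> L"
  shows "left_join L p q = join L p (left_max p q)"
proof -
  have "(THE u. u \<in> L \<and> meet L p q \<le> u \<and> u \<le> q \<and> has_join L p u \<and>
       (\<forall>v\<in>L. meet L p q \<le> v \<and> v \<le> q \<and> has_join L p v \<and> u \<le> v \<longrightarrow> v = u)) = left_max p q"
    using left_max_is_greatest[OF pq] unfolding left_candidates_def by (intro the_equality) (auto intro: order.antisym)
  then show ?thesis unfolding left_join_def by simp
qed

lemma left_join_properties:
  assumes pq: "p \<in> L" "q \<in> L"
  shows "left_join L p q \<in> L" "p \<le> left_join L p q"
    "meet L (left_join L p q) q = left_max p q"
    "rk L (left_join L p q) + rk L (meet L p q) = rk L p + rk L (left_max p q)"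
proof -
  define m where "m = meet L p q"
  define g where "g = left_max p q"
  define j where "j = left_join L p q"
  have g: "g \<in> L" "m \<le> g" "g \<le> q" "has_join L p g"
    using left_max_is_greatest(1)[OF pq] unfolding left_candidates_def g_def m_def by auto
  have jd: "j = join L p g" using left_join_eq[OF pq] j_def g_def by simp
  have j: "j \<in> L" "p \<le> j" "g \<le> j" using join_closed join_ge1 join_ge2 g(4) jd by auto
  show "left_join L p q \<in> L" "p \<le> left_join L p q" using j j_def by auto
  have mL: "m \<in> L" "m \<le> p" using meet_closed meet_le1 pq m_def by auto
  have "meet L p g = m"
  proof (rule meet_eqI[OF pq(1) g(1) mL g(2)])
    fix w assume "w \<in> L" "w \<le> p" "w \<le> g"
    then show "w \<le> m" using meet_greatest[OF pq] g(3) m_def by (meson order_trans)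
  qed
  then show "rk L (left_join L p q) + rk L (meet L p q) = rk L p + rk L (left_max p q)"
    using rk_join_meet[OF pq(1) g(1,4)] jd j_def g_def m_def by simp
  define c where "c = meet L j q"
  have c: "c \<in> L" "c \<le> j" "c \<le> q" "g \<le> c"
    using meet_closed[OF j(1) pq(2)] meet_le1[OF j(1) pq(2)] meet_le2[OF j(1) pq(2)]
      meet_greatest[OF j(1) pq(2) g(1) j(3) g(3)] c_def by auto
  have "m \<le> c" using g(2) c(4) by (rule order_trans)
  then have "c \<in> left_candidates p q" unfolding left_candidates_def m_def
    using c(1,3) has_joinI[OF pq(1) c(1) j(1,2) c(2)] by blast
  then have "c \<le> g" using left_max_is_greatest(2)[OF pq] g_def by blast
  then have "c = g" using c(4) by (rule order.antisym)
  then show "meet L (left_join L p q) q = left_max p q" using c_def j_def g_def by simp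
qed

lemma meet_left_join_left: "p \<in> L \<Longrightarrow> q \<in> L \<Longrightarrow> meet L (left_join L p q) p = p"
  using meet_absorb2 left_join_properties(1,2) by blast

lemma left_join_in_Ipq:
  assumes pq: "p \<in> L" "q \<in> L"
  shows "left_join L p q \<in> Ipq L p q"
  using left_join_properties[OF pq] meet_left_join_left[OF pq] Ipq_iff[OF pq]
    meet_commute[OF pq(1)] unfolding rk_dist_def by auto

lemma right_join_in_Ipq:
  assumes "p \<in> L" "q \<in> L"
  shows "right_join L p q \<in> Ipq L p q"
  using left_join_in_Ipq[of q p] Ipq_commute right_join_eq_left_join assms by simp

lemma mem_Ipq_decompose:
  assumes pq: "p \<in> L" "q \<in> L" and u: "u \<in> Ipq L p q"
  shows "u \<in> L" "meet L p q \<le> u" "has_join L (meet L u p) (meet L u q)"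
    "join L (meet L u p) (meet L u q) = u"
proof -
  have uL: "u \<in> L" and d: "rk_dist p u + rk_dist u q = rk_dist p q" using Ipq_iff[OF pq] u by auto
  show "u \<in> L" by (rule uL)
  define m where "m = meet L p q"
  define a where "a = meet L u p"
  define b where "b = meet L u q"
  have mL: "m \<in> L" "m \<le> p" "m \<le> q" using meet_closed meet_le1 meet_le2 pq m_def by auto
  have a: "a \<in> L" "a \<le> u" "a \<le> p" using meet_closed meet_le1 meet_le2 pq uL a_def by auto
  have b: "b \<in> L" "b \<le> u" "b \<le> q" using meet_closed meet_le1 meet_le2 pq uL b_def by auto
  have h: "has_join L a b" using has_joinI[OF a(1) b(1) uL a(2) b(2)] .
  then show "has_join L (meet L u p) (meet L u q)" using a_def b_def by simp
  define j where "j = join L a b"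
  have j: "j \<in> L" "j \<le> u" using join_closed[OF h] join_least[OF h uL a(2) b(2)] j_def by auto
  define c where "c = meet L u m"
  have c: "c \<in> L" "c \<le> u" "c \<le> m" using meet_closed meet_le1 meet_le2 uL mL c_def by auto
  have "meet L a b = c"
  proof (rule meet_eqI[OF a(1) b(1) c(1)])
    show "c \<le> a" "c \<le> b" unfolding a_def b_def
      using meet_greatest[OF uL] pq c mL by (meson order_trans)+
    fix w assume w: "w \<in> L" "w \<le> a" "w \<le> b"
    then have "w \<le> m" using meet_greatest pq a b m_def by (meson order_trans)
    then show "w \<le> c" using meet_greatest uL mL(1) w a c_def by (meson order_trans)
  qed
  \<comment> \<open>modularity turns the distance equation into \<open>rk c + rk u \<le> rk m + rk j\<close>\<close>
  then have "rk L j + rk L c = rk L a + rk L b" using rk_join_meet[OF a(1) b(1) h] j_def by simp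
  moreover have "rk L c \<le> rk L m" "rk L j \<le> rk L u" using rk_mono c mL j uL by auto
  moreover have "int (rk L u) \<le> int (rk L a) + int (rk L b) - int (rk L m)"
    using d meet_commute[OF pq(1) uL] unfolding rk_dist_def m_def a_def b_def by simp
  ultimately have "rk L c = rk L m" "rk L j = rk L u" by linarith+
  then show "meet L p q \<le> u" "join L (meet L u p) (meet L u q) = u"
    using eq_if_le_rk_eq[OF c(1) mL(1) c(3)] eq_if_le_rk_eq[OF j(1) uL j(2)] c(2) m_def j_def
      a_def b_def by auto
qed

lemma rk_add_le_left_max:
  assumes pq: "p \<in> L" "q \<in> L" and a: "a \<in> L" "meet L p q \<le> a" "a \<le> p"
    and b: "b \<in> L" "meet L p q \<le> b" "b \<le> q" and h: "has_join L a b"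
  shows "rk L a + rk L b \<le> rk L p + rk L (left_max p q)"
proof -
  define m where "m = meet L p q"
  have mL: "m \<in> L" using meet_closed pq m_def by auto
  obtain F where F: "F \<in> Frames" "{m, a, p} \<subseteq> F" "{m, b, q} \<subseteq> F"
    using ex_frame_containing_chains[OF is_chain_triple[OF mL a(1) pq(1) a(2)[folded m_def] a(3)]
        is_chain_triple[OF mL b(1) pq(2) b(2)[folded m_def] b(3)]]
    by blast
  have inF: "m \<in> F" "a \<in> F" "p \<in> F" "b \<in> F" "q \<in> F" using F by auto
  define V where "V = S2n_compatible_part (frame_coord F p) (frame_coord F q)"
  have V: "V \<in> S2n n" using S2n_compatible_part_in frame_coord_in[OF F(1) inF(5)] V_def by auto
  define v where "v = frame_point F V"
  have "v \<in> left_candidates p q"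
    unfolding left_candidates_def
  proof (intro CollectI conjI)
    show "v \<in> L" using frame_point_in[OF F(1) V] frame_subset[OF F(1)] v_def by auto
    show "v \<le> q" using frame_point_le_iff[OF F(1) V inF(5)] S2n_compatible_part_le V_def v_def by simp
    show "meet L p q \<le> v"
      using le_frame_point_iff[OF F(1) V inF(1)] frame_coord_meet[OF F(1) inF(3,5)]
        S2n_meet_le_compatible_part V_def v_def m_def by simp
    show "has_join L p v"
      using is_join_frame_point[OF F(1) inF(3) frame_point_in[OF F(1) V]] frame_coord_point[OF F(1) V]
        S2n_compatible_compatible_part V_def v_def unfolding has_join_def by auto
  qed
  then have "rk L v \<le> rk L (left_max p q)"
    using left_max_is_greatest[OF pq] rk_mono unfolding left_candidates_def by auto
  moreover have "S2n_rank n (frame_coord F a) + S2n_rank n (frame_coord F b)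
      \<le> S2n_rank n (frame_coord F p) + S2n_rank n V"
    using S2n_rank_add_le_compatible_part frame_coord_le_iff[OF F(1)] inF a b V_def
      frame_coord_compatible[OF F(1) inF(2,4) join_closed[OF h] join_ge1[OF h] join_ge2[OF h]]
    by auto
  ultimately show ?thesis
    using rk_eq_S2n_rank[OF F(1)] inF(2,3,4) frame_point_in[OF F(1) V] frame_coord_point[OF F(1) V] v_def
    by simp
qed

lemma rk_meets_le_if_mem_Ipq:
  assumes pq: "p \<in> L" "q \<in> L" and u: "u \<in> Ipq L p q"
  shows "rk L (meet L u p) + rk L (meet L u q) \<le> rk L p + rk L (left_max p q)"
    "rk L (meet L u p) \<le> rk L p" "rk L (meet L u q) \<le> rk L q"
proof -
  note u' = mem_Ipq_decompose[OF pq u]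
  have mL: "meet L p q \<in> L" using meet_closed pq by auto
  have a: "meet L u p \<in> L" "meet L p q \<le> meet L u p" "meet L u p \<le> p"
    using meet_closed meet_le2 meet_greatest[OF u'(1) pq(1) mL u'(2) meet_le1[OF pq]] pq u'(1) by auto
  have b: "meet L u q \<in> L" "meet L p q \<le> meet L u q" "meet L u q \<le> q"
    using meet_closed meet_le2 meet_greatest[OF u'(1) pq(2) mL u'(2) meet_le2[OF pq]] pq u'(1) by auto
  show "rk L (meet L u p) + rk L (meet L u q) \<le> rk L p + rk L (left_max p q)"
    using rk_add_le_left_max[OF pq a b u'(3)] .
  show "rk L (meet L u p) \<le> rk L p" "rk L (meet L u q) \<le> rk L q" using rk_mono a b pq by auto
qed

lemma eq_left_join_if_rk_meets:
  assumes pq: "p \<in> L" "q \<in> L" and u: "u \<in> Ipq L p q"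
    and rk_p: "rk L (meet L u p) = rk L p" and rk_q: "rk L (meet L u q) = rk L (left_max p q)"
  shows "u = left_join L p q"
proof -
  note u' = mem_Ipq_decompose[OF pq u]
  have "meet L u p = p"
    using eq_if_le_rk_eq[OF meet_closed[OF u'(1) pq(1)] pq(1) meet_le2[OF u'(1) pq(1)]] rk_p by simp
  moreover have "meet L u q \<in> left_candidates p q"
    unfolding left_candidates_def
    using meet_closed meet_le2 meet_greatest[OF u'(1) pq(2) meet_closed[OF pq] u'(2) meet_le2[OF pq]]
      u'(1,3) pq \<open>meet L u p = p\<close> by auto
  then have "meet L u q = left_max p q"
    using eq_if_le_rk_eq[OF meet_closed[OF u'(1) pq(2)]] left_max_is_greatest[OF pq] rk_q
    unfolding left_candidates_def by auto
  ultimately show ?thesis using u'(4) left_join_eq[OF pq] by simp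
qed

lemma rk_left_max_balance:
  assumes pq: "p \<in> L" "q \<in> L"
  shows "rk L p + rk L (left_max p q) = rk L q + rk L (left_max q p)"
proof -
  \<comment> \<open>each of the two left joins lies in the interval, so each sum bounds the other\<close>
  have "left_join L q p \<in> Ipq L p q"
    using left_join_in_Ipq[OF pq(2,1)] Ipq_commute[OF pq] by simp
  from rk_meets_le_if_mem_Ipq(1)[OF pq this]
  have "rk L (left_max q p) + rk L q \<le> rk L p + rk L (left_max p q)"
    using left_join_properties(3)[OF pq(2,1)] meet_left_join_left[OF pq(2,1)] by simp
  moreover have "left_join L p q \<in> Ipq L q p"
    using left_join_in_Ipq[OF pq] Ipq_commute[OF pq] by simp
  from rk_meets_le_if_mem_Ipq(1)[OF pq(2,1) this]
  have "rk L (left_max p q) + rk L p \<le> rk L q + rk L (left_max q p)"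
    using left_join_properties(3)[OF pq] meet_left_join_left[OF pq] by simp
  ultimately show ?thesis by simp
qed

subsection \<open>Rank vectors of geodesic elements\<close>

lemma rvec_swap: "p \<in> L \<Longrightarrow> q \<in> L \<Longrightarrow> rvec L u q p = prod.swap (rvec L u p q)"
  unfolding rvec_def using meet_commute by simp

lemma eq_left_join_if_rvec_eq:
  assumes pq: "p \<in> L" "q \<in> L" and u: "u \<in> Ipq L p q"
    and eq: "rvec L u p q = rvec L (left_join L p q) p q"
  shows "u = left_join L p q"
  using eq_left_join_if_rk_meets[OF pq u] eq meet_left_join_left[OF pq] left_join_properties(3)[OF pq]
  unfolding rvec_def by simp

lemma eq_right_join_if_rvec_eq:
  assumes pq: "p \<in> L" "q \<in> L" and u: "u \<in> Ipq L p q"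
    and eq: "rvec L u p q = rvec L (right_join L p q) p q"
  shows "u = right_join L p q"
proof -
  have "u \<in> Ipq L q p" using u Ipq_commute[OF pq] by simp
  moreover have "rvec L u q p = rvec L (left_join L q p) q p"
    using eq rvec_swap[OF pq] right_join_eq_left_join[OF pq] by simp
  ultimately show ?thesis using eq_left_join_if_rvec_eq[OF pq(2,1)] right_join_eq_left_join[OF pq]
    by simp
qed

lemma rvec_two_corners:
  assumes pq: "p \<in> L" "q \<in> L"
  defines "A \<equiv> real (rk L p) - real (rk L (meet L p q))"
    and "B \<equiv> real (rk L q) - real (rk L (meet L p q))"
    and "S \<equiv> real (rk L p) + real (rk L (left_max p q)) - 2 * real (rk L (meet L p q))"
  shows "two_corners ((\<lambda>u. rvec L u p q) ` Ipq L p q) A B S"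
    "rvec L (left_join L p q) p q = (A, S - A)" "rvec L (right_join L p q) p q = (S - B, B)"
proof -
  show lj: "rvec L (left_join L p q) p q = (A, S - A)"
    using meet_left_join_left[OF pq] left_join_properties(3)[OF pq]
    unfolding rvec_def A_def S_def by simp
  have "real (rk L p) + real (rk L (left_max p q)) = real (rk L q) + real (rk L (left_max q p))"
    using rk_left_max_balance[OF pq] by (metis of_nat_add)
  then show rj: "rvec L (right_join L p q) p q = (S - B, B)"
    using right_join_eq_left_join[OF pq] meet_left_join_left[OF pq(2,1)]
      left_join_properties(3)[OF pq(2,1)] rvec_swap[OF pq(2,1)]
    unfolding rvec_def B_def S_def by (simp add: meet_commute[OF pq])
  show "two_corners ((\<lambda>u. rvec L u p q) ` Ipq L p q) A B S"
  proof
    show "(A, S - A) \<in> (\<lambda>u. rvec L u p q) ` Ipq L p q"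
      using left_join_in_Ipq[OF pq] lj by (metis image_eqI)
    show "(S - B, B) \<in> (\<lambda>u. rvec L u p q) ` Ipq L p q"
      using right_join_in_Ipq[OF pq] rj by (metis image_eqI)
    have "rk L (left_max p q) \<le> rk L q"
      using rk_mono left_max_is_greatest(1)[OF pq] pq unfolding left_candidates_def by auto
    then show "S \<le> A + B" unfolding A_def B_def S_def by simp
    show "\<forall>z\<in>(\<lambda>u. rvec L u p q) ` Ipq L p q. fst z \<le> A \<and> snd z \<le> B \<and> fst z + snd z \<le> S"
    proof
      fix z assume "z \<in> (\<lambda>u. rvec L u p q) ` Ipq L p q"
      then obtain u where u: "u \<in> Ipq L p q" "z = rvec L u p q" by blast
      note bounds = rk_meets_le_if_mem_Ipq[OF pq u(1)]
      have "real (rk L (meet L u p)) + real (rk L (meet L u q)) \<le> real (rk L p) + real (rk L (left_max p q))"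
        using bounds(1) by (metis of_nat_add of_nat_mono)
      then show "fst z \<le> A \<and> snd z \<le> B \<and> fst z + snd z \<le> S"
        using u(2) bounds(2,3) unfolding rvec_def A_def B_def S_def by simp
    qed
  qed
qed

lemma ex_two_corners:
  assumes pq: "p \<in> L" "q \<in> L"
  obtains A B S where "two_corners ((\<lambda>u. rvec L u p q) ` Ipq L p q) A B S"
    "rvec L (left_join L p q) p q = (A, S - A)" "rvec L (right_join L p q) p q = (S - B, B)"
  using rvec_two_corners[OF pq] by blast

lemma Epq_eq:
  assumes pq: "p \<in> L" "q \<in> L"
  shows "Epq L p q = {left_join L p q, right_join L p q}"
proof -
  obtain A B S where "two_corners ((\<lambda>u. rvec L u p q) ` Ipq L p q) A B S"
    and corners: "rvec L (left_join L p q) p q = (A, S - A)" "rvec L (right_join L p q) p q = (S - B, B)"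
    by (rule ex_two_corners[OF pq])
  then interpret two_corners "(\<lambda>u. rvec L u p q) ` Ipq L p q" A B S by simp
  have "u \<in> Epq L p q \<longleftrightarrow> u \<in> Ipq L p q \<and>
      (rvec L u p q = rvec L (left_join L p q) p q \<or> rvec L u p q = rvec L (right_join L p q) p q)" for u
    using pareto_extreme_point_iff[of "rvec L u p q"] corners
    unfolding Epq_def ConvI_def by auto
  then show ?thesis
    using left_join_in_Ipq[OF pq] right_join_in_Ipq[OF pq] eq_left_join_if_rvec_eq[OF pq]
      eq_right_join_if_rvec_eq[OF pq]
    by blast
qed

lemma frac_join_eq:
  assumes pq: "p \<in> L" "q \<in> L"
  shows "frac_join L p q =
    (\<lambda>u. (if u = left_join L p q then 1/2 else 0) + (if u = right_join L p q then 1/2 else 0))"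
proof -
  obtain A B S where "two_corners ((\<lambda>u. rvec L u p q) ` Ipq L p q) A B S"
    and corners: "rvec L (left_join L p q) p q = (A, S - A)" "rvec L (right_join L p q) p q = (S - B, B)"
    by (rule ex_two_corners[OF pq])
  then interpret two_corners "(\<lambda>u. rvec L u p q) ` Ipq L p q" A B S by simp
  have cone: "Cone L u p q = normal_cone (rvec L u p q)" for u
    unfolding Cone_def normal_cone_def ConvI_def ..
  have "left_join L p q = right_join L p q \<longleftrightarrow> A = S - B"
  proof
    assume "A = S - B"
    then have "rvec L (left_join L p q) p q = rvec L (right_join L p q) p q" using corners by simp
    then show "left_join L p q = right_join L p q"
      using eq_right_join_if_rvec_eq[OF pq left_join_in_Ipq[OF pq]] by simp
  qed (use corners in auto)
  then show ?thesis
    unfolding frac_join_def Epq_eq[OF pq] cone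
    using cone_weight_left_corner cone_weight_right_corner by (auto simp: fun_eq_iff corners)
qed

end

theorem theorem3p6:
  fixes L :: "'a::order set" and Frames :: "'a set set" and n :: nat
  assumes "polar_space L Frames n"
    and "p \<in> L" and "q \<in> L"
  shows "frac_join L p q =
    (\<lambda>u. (if u = left_join L p q then 1/2 else 0) + (if u = right_join L p q then 1/2 else 0))"
  using polar.frac_join_eq[OF polar.intro[OF assms(1)] assms(2,3)] .

end
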